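(* Let $n\ge1$ and $T\in I^\ell(n)$. Then: - the socle of $T$ is isomorphic to $S_1$; - the cosocle (top) of $T$ is isomorphic to $S_0$; - let $W\subseteq T$ be the socle; the module $\ker\big(T/W\to S_0\big)$ (kernel of the map induced by the projection to the cosocle) is isomorphic to a point of $I^r(n-1)$.
   Context: **The preprojective algebra.** $\Pi$ is the completed preprojective algebra of the quiver with vertices $0,1$ and arrows $\alpha,\beta:0\to1$, $\alpha^*,\beta^*:1\to0$. It is the path algebra, completed with respect to the ideal generated by the arrows, modulo the relations $\alpha\alpha^*+\beta\beta^*=0$ and $\alpha^*\alpha+\beta^*\beta=0$. A finite-dimensional $\Pi$-module is a graded space $V=V_0\oplus V_1$ with linear maps $t_\alpha,t_\beta:V_0\to V_1$ and $t_{\alpha^*},t_{\beta^*}:V_1\to V_0$ such that: - $t_\alpha t_{\alpha^*}+t_\beta t_{\beta^*}=0$ and $t_{\alpha^*}t_\alpha+t_{\beta^*}t_\beta=0$; - all sufficiently long composites of these maps along paths vanish. Its dimension vector is $(\dim V_0)\alpha_0+(\dim V_1)\alpha_1$, and we put $\delta=\alpha_0+\alpha_1$. $S_0,S_1$ are the simple modules of dimension vectors $\alpha_0,\alpha_1$. $\Pi(\mu)$ is the variety of module structures on a fixed graded space of dimension vector $\mu$. **The varieties $I^\ell(n)$ and $I^r(n)$.** - $I^\ell(n)$ is the set of $T\in\Pi(n\delta)$ with $t_\alpha$ invertible and $t_{\beta^*}t_\alpha$ nilpotent of order exactly $n$, i.e. $(t_{\beta^*}t_\alpha)^n=0\ne(t_{\beta^*}t_\alpha)^{n-1}$.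 - $I^r(n)$ is the set of $T\in\Pi(n\delta)$ with $t_{\beta^*}$ invertible and $t_\alpha t_{\beta^*}$ nilpotent of order exactly $n$. - $I^r(0)$ consists of the zero module. *)

theory Defs
  imports "Jordan_Normal_Form.Matrix"
begin

text \<open>Finite-dimensional modules over the completed preprojective algebra of the
quiver with vertices 0,1, arrows alpha, beta : 0 -> 1 and alphas, betas : 1 -> 0,
over the complex numbers.\<close>

record rep =
  dim0 :: nat
  dim1 :: nat
  ta  :: "complex mat"
  tb  :: "complex mat"
  tas :: "complex mat"
  tbs :: "complex mat"

text \<open>Composite of arrows along a path starting at vertex i (False = 0, True = 1);
the list entry True selects alpha resp. alpha*, False selects beta resp. beta*.
The first list element is the first arrow applied.\<close>
fun pathmat :: "rep \<Rightarrow> bool \<Rightarrow> bool list \<Rightarrow> complex mat" where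
  "pathmat T False [] = 1\<^sub>m (dim0 T)"
| "pathmat T True [] = 1\<^sub>m (dim1 T)"
| "pathmat T False (c # cs) = pathmat T True cs * (if c then ta T else tb T)"
| "pathmat T True (c # cs) = pathmat T False cs * (if c then tas T else tbs T)"

definition dimv :: "rep \<Rightarrow> bool \<Rightarrow> nat" where
  "dimv T i = (if i then dim1 T else dim0 T)"

definition is_module :: "rep \<Rightarrow> bool" where
  "is_module T \<longleftrightarrow>
     ta T \<in> carrier_mat (dim1 T) (dim0 T) \<and> tb T \<in> carrier_mat (dim1 T) (dim0 T) \<and>
     tas T \<in> carrier_mat (dim0 T) (dim1 T) \<and> tbs T \<in> carrier_mat (dim0 T) (dim1 T) \<and>
     ta T * tas T + tb T * tbs T = 0\<^sub>m (dim1 T) (dim1 T) \<and>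
     tas T * ta T + tbs T * tb T = 0\<^sub>m (dim0 T) (dim0 T) \<and>
     (\<exists>N. \<forall>i cs. length cs \<ge> N \<longrightarrow>
        pathmat T i cs = 0\<^sub>m (dimv T (if even (length cs) then i else \<not> i)) (dimv T i))"

definition nilp_order :: "complex mat \<Rightarrow> nat \<Rightarrow> nat \<Rightarrow> bool" where
  "nilp_order M d m \<longleftrightarrow> M ^\<^sub>m m = 0\<^sub>m d d \<and> M ^\<^sub>m (m - 1) \<noteq> 0\<^sub>m d d"

definition I_l :: "nat \<Rightarrow> rep set" where
  "I_l n = {T. is_module T \<and> dim0 T = n \<and> dim1 T = n \<and> invertible_mat (ta T) \<and>
                nilp_order (tbs T * ta T) n n}"

definition I_r :: "nat \<Rightarrow> rep set" where
  "I_r n = (if n = 0 then {T. is_module T \<and> dim0 T = 0 \<and> dim1 T = 0}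
            else {T. is_module T \<and> dim0 T = n \<and> dim1 T = n \<and> invertible_mat (tbs T) \<and>
                nilp_order (ta T * tbs T) n n})"

definition S0 :: rep where
  "S0 = \<lparr>dim0 = 1, dim1 = 0, ta = 0\<^sub>m 0 1, tb = 0\<^sub>m 0 1, tas = 0\<^sub>m 1 0, tbs = 0\<^sub>m 1 0\<rparr>"
definition S1 :: rep where
  "S1 = \<lparr>dim0 = 0, dim1 = 1, ta = 0\<^sub>m 1 0, tb = 0\<^sub>m 1 0, tas = 0\<^sub>m 0 1, tbs = 0\<^sub>m 0 1\<rparr>"

definition subspace_of :: "nat \<Rightarrow> complex vec set \<Rightarrow> bool" where
  "subspace_of d U \<longleftrightarrow> U \<subseteq> carrier_vec d \<and> 0\<^sub>v d \<in> U \<and>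
     (\<forall>u\<in>U. \<forall>v\<in>U. u + v \<in> U) \<and> (\<forall>c. \<forall>u\<in>U. c \<cdot>\<^sub>v u \<in> U)"

text \<open>Submodules of T, given as graded subspaces (U0, U1).\<close>
definition submod :: "rep \<Rightarrow> complex vec set \<Rightarrow> complex vec set \<Rightarrow> bool" where
  "submod T U0 U1 \<longleftrightarrow> subspace_of (dim0 T) U0 \<and> subspace_of (dim1 T) U1 \<and>
     (\<forall>v\<in>U0. ta T *\<^sub>v v \<in> U1 \<and> tb T *\<^sub>v v \<in> U1) \<and>
     (\<forall>w\<in>U1. tas T *\<^sub>v w \<in> U0 \<and> tbs T *\<^sub>v w \<in> U0)"

definition simple_submod :: "rep \<Rightarrow> complex vec set \<Rightarrow> complex vec set \<Rightarrow> bool" where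
  "simple_submod T U0 U1 \<longleftrightarrow> submod T U0 U1 \<and> (U0 \<noteq> {0\<^sub>v (dim0 T)} \<or> U1 \<noteq> {0\<^sub>v (dim1 T)}) \<and>
     (\<forall>X0 X1. submod T X0 X1 \<and> X0 \<subseteq> U0 \<and> X1 \<subseteq> U1 \<longrightarrow>
        (X0 = {0\<^sub>v (dim0 T)} \<and> X1 = {0\<^sub>v (dim1 T)}) \<or> (X0 = U0 \<and> X1 = U1))"

definition maximal_submod :: "rep \<Rightarrow> complex vec set \<Rightarrow> complex vec set \<Rightarrow> bool" where
  "maximal_submod T U0 U1 \<longleftrightarrow> submod T U0 U1 \<and>
     (U0 \<noteq> carrier_vec (dim0 T) \<or> U1 \<noteq> carrier_vec (dim1 T)) \<and>
     (\<forall>X0 X1. submod T X0 X1 \<and> U0 \<subseteq> X0 \<and> U1 \<subseteq> X1 \<longrightarrow>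
        (X0 = U0 \<and> X1 = U1) \<or> (X0 = carrier_vec (dim0 T) \<and> X1 = carrier_vec (dim1 T)))"

text \<open>Socle: the sum (= generated subspace) of all simple submodules, componentwise.\<close>
definition soc0 :: "rep \<Rightarrow> complex vec set" where
  "soc0 T = \<Inter>{S. subspace_of (dim0 T) S \<and> (\<forall>U0 U1. simple_submod T U0 U1 \<longrightarrow> U0 \<subseteq> S)}"
definition soc1 :: "rep \<Rightarrow> complex vec set" where
  "soc1 T = \<Inter>{S. subspace_of (dim1 T) S \<and> (\<forall>U0 U1. simple_submod T U0 U1 \<longrightarrow> U1 \<subseteq> S)}"

text \<open>Radical: intersection of all maximal submodules; the cosocle (top) is T / rad T.\<close>
definition rad0 :: "rep \<Rightarrow> complex vec set" where
  "rad0 T = carrier_vec (dim0 T) \<inter> \<Inter>{U0. \<exists>U1. maximal_submod T U0 U1}"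
definition rad1 :: "rep \<Rightarrow> complex vec set" where
  "rad1 T = carrier_vec (dim1 T) \<inter> \<Inter>{U1. \<exists>U0. maximal_submod T U0 U1}"

text \<open>The subquotient K / W of T (W \<subseteq> K submodules) is isomorphic to the module T':
there are linear surjections f_i : K_i -> C^(dim_i T') with kernel W_i, compatible with
all four arrows (these induce a module isomorphism K/W \<cong> T').\<close>
definition lin_on :: "complex vec set \<Rightarrow> (complex vec \<Rightarrow> complex vec) \<Rightarrow> bool" where
  "lin_on K f \<longleftrightarrow> (\<forall>u\<in>K. \<forall>v\<in>K. f (u + v) = f u + f v) \<and> (\<forall>c. \<forall>u\<in>K. f (c \<cdot>\<^sub>v u) = c \<cdot>\<^sub>v f u)"

definition subquot_iso ::
  "rep \<Rightarrow> complex vec set \<Rightarrow> complex vec set \<Rightarrow> complex vec set \<Rightarrow> complex vec set \<Rightarrow> rep \<Rightarrow> bool" where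
  "subquot_iso T K0 K1 W0 W1 T' \<longleftrightarrow>
     submod T K0 K1 \<and> submod T W0 W1 \<and> W0 \<subseteq> K0 \<and> W1 \<subseteq> K1 \<and>
     (\<exists>f0 f1. lin_on K0 f0 \<and> lin_on K1 f1 \<and>
        f0 ` K0 = carrier_vec (dim0 T') \<and> f1 ` K1 = carrier_vec (dim1 T') \<and>
        (\<forall>v\<in>K0. f0 v = 0\<^sub>v (dim0 T') \<longleftrightarrow> v \<in> W0) \<and>
        (\<forall>v\<in>K1. f1 v = 0\<^sub>v (dim1 T') \<longleftrightarrow> v \<in> W1) \<and>
        (\<forall>v\<in>K0. f1 (ta T *\<^sub>v v) = ta T' *\<^sub>v f0 v \<and> f1 (tb T *\<^sub>v v) = tb T' *\<^sub>v f0 v) \<and>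
        (\<forall>w\<in>K1. f0 (tas T *\<^sub>v w) = tas T' *\<^sub>v f1 w \<and> f0 (tbs T *\<^sub>v w) = tbs T' *\<^sub>v f1 w))"

end

theory Submission
  imports Defs "Jordan_Normal_Form.Determinant"
begin

(* Let T be in I^l(n) with arrows A = t_alpha (invertible), B = t_beta, X = t_alpha*,
   Y = t_beta*.  The endomorphism N = Y A of V_0 = C^n is nilpotent of order exactly n, hence a
   single Jordan block: if N^(n-1) u is nonzero, the Krylov vectors u, N u, ..., N^(n-1) u form
   the columns of an invertible P with N P = P J, J the lower shift matrix.  With Q = P^-1 every
   statement becomes one about the coordinates Q v of v in V_0 and Q A^-1 w of w in V_1:
   - the socle is (0, ker Y), and ker Y is the line read off by the last V_1-coordinate;
   - the radical is (Rad0, V_1), Rad0 = {v. (Q v)_0 = 0} the image of N, read off by the first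
     V_0-coordinate, so the top is S_0;
   - dropping the first V_0-coordinate and the last V_1-coordinate identifies rad T / soc T with
     a module of dimension vector (n-1) delta in which t_beta* is the identity and t_alpha is J,
     i.e. a point of I^r(n-1). *)

lemma mult_mat_unit_vec:
  fixes A :: "complex mat"
  assumes "A \<in> carrier_mat nr nc" "j < nc"
  shows "A *\<^sub>v unit_vec nc j = col A j"
  using assms by (intro eq_vecI) auto

lemma mat_eq_by_action:
  fixes A B :: "complex mat"
  assumes A: "A \<in> carrier_mat nr nc" and B: "B \<in> carrier_mat nr nc"
    and action: "\<And>v. v \<in> carrier_vec nc \<Longrightarrow> A *\<^sub>v v = B *\<^sub>v v"
  shows "A = B"
proof (rule mat_col_eqI)
  fix j assume "j < dim_col B"
  then have j: "j < nc" using B by auto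
  show "col A j = col B j"
    using action[of "unit_vec nc j"] mult_mat_unit_vec[OF A j] mult_mat_unit_vec[OF B j] by simp
qed (use A B in auto)

lemma mult_mat_zero_vec[simp]: "A \<in> carrier_mat nr nc \<Longrightarrow> A *\<^sub>v 0\<^sub>v nc = 0\<^sub>v nr"
  by (intro eq_vecI) auto

lemma mult_zero_mat_vec[simp]: "v \<in> carrier_vec nc \<Longrightarrow> 0\<^sub>m nr nc *\<^sub>v v = 0\<^sub>v nr"
  by (intro eq_vecI) auto

lemma mult_mat_uminus_vec:
  fixes A :: "complex mat"
  shows "A \<in> carrier_mat nr nc \<Longrightarrow> v \<in> carrier_vec nc \<Longrightarrow> A *\<^sub>v (- v) = - (A *\<^sub>v v)"
  by (intro eq_vecI) (auto simp: scalar_prod_def sum_negf)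

lemma eq_uminus_of_add_eq_zero:
  fixes v w :: "complex vec"
  shows "v \<in> carrier_vec m \<Longrightarrow> w \<in> carrier_vec m \<Longrightarrow> v + w = 0\<^sub>v m \<Longrightarrow> v = - w"
  by (intro eq_vecI) (auto simp: vec_eq_iff eq_neg_iff_add_eq_0)

lemma funpow_mult_carrier:
  assumes M: "M \<in> carrier_mat m m"
  shows "v \<in> carrier_vec m \<Longrightarrow> ((\<lambda>x. M *\<^sub>v x) ^^ k) v \<in> carrier_vec m"
  using M by (induction k) auto

lemma pow_mat_mult_vec:
  assumes M: "M \<in> carrier_mat m m"
  shows "v \<in> carrier_vec m \<Longrightarrow> (M ^\<^sub>m k) *\<^sub>v v = ((\<lambda>x. M *\<^sub>v x) ^^ k) v"
proof (induction k arbitrary: v)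
  case 0 then show ?case using M by simp
next
  case (Suc k)
  have "(M ^\<^sub>m Suc k) *\<^sub>v v = (M ^\<^sub>m k) *\<^sub>v (M *\<^sub>v v)"
    using M Suc.prems assoc_mult_mat_vec[of "M ^\<^sub>m k" m m M m v] by simp
  also have "\<dots> = ((\<lambda>x. M *\<^sub>v x) ^^ k) (M *\<^sub>v v)" using Suc.IH Suc.prems M by simp
  finally show ?case by (simp add: funpow_Suc_right del: funpow.simps)
qed

lemma selection_mat_vec:
  assumes "i < nr" "z \<in> carrier_vec nc"
  shows "(mat nr nc (\<lambda>(i,j). if j = h i \<and> c i then 1 else 0) *\<^sub>v z) $ i
     = (if c i \<and> h i < nc then z $ h i else (0::complex))"
proof -
  have "(mat nr nc (\<lambda>(i,j). if j = h i \<and> c i then 1 else 0) *\<^sub>v z) $ i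
     = (\<Sum>j\<in>{0..<nc}. (if j = h i \<and> c i then 1 else 0) * z $ j)"
    using assms by (simp add: scalar_prod_def row_def)
  also have "\<dots> = (\<Sum>j\<in>{0..<nc}. if j = h i then (if c i then z $ j else 0) else 0)"
    by (rule sum.cong) auto
  also have "\<dots> = (if c i \<and> h i < nc then z $ h i else 0)"
    by (simp add: sum.delta)
  finally show ?thesis .
qed

lemma selection_mat_vec_total:
  "i < nr \<Longrightarrow> z \<in> carrier_vec nc \<Longrightarrow>
     (mat nr nc (\<lambda>(i,j). if j = h i then 1 else 0) *\<^sub>v z) $ i = (if h i < nc then z $ h i else (0::complex))"
  using selection_mat_vec[of i nr z nc h "\<lambda>_. True"] by simp

definition shift_mat :: "nat \<Rightarrow> complex mat" where
  "shift_mat m = mat m m (\<lambda>(i,j). if j = i - 1 \<and> i \<noteq> 0 then 1 else 0)"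
definition shift_up_mat :: "nat \<Rightarrow> complex mat" where
  "shift_up_mat m = mat m m (\<lambda>(i,j). if j = Suc i then 1 else 0)"
definition drop_first_mat :: "nat \<Rightarrow> complex mat" where
  "drop_first_mat m = mat (m - 1) m (\<lambda>(i,j). if j = Suc i then 1 else 0)"
definition push_first_mat :: "nat \<Rightarrow> complex mat" where
  "push_first_mat m = mat m (m - 1) (\<lambda>(i,j). if j = i - 1 \<and> i \<noteq> 0 then 1 else 0)"
definition drop_last_mat :: "nat \<Rightarrow> complex mat" where
  "drop_last_mat m = mat (m - 1) m (\<lambda>(i,j). if j = i then 1 else 0)"
definition append_last_mat :: "nat \<Rightarrow> complex mat" where
  "append_last_mat m = mat m (m - 1) (\<lambda>(i,j). if j = i then 1 else 0)"

lemma shift_mats_carrier[simp]: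
  "shift_mat m \<in> carrier_mat m m" "shift_up_mat m \<in> carrier_mat m m"
  "drop_first_mat m \<in> carrier_mat (m - 1) m" "push_first_mat m \<in> carrier_mat m (m - 1)"
  "drop_last_mat m \<in> carrier_mat (m - 1) m" "append_last_mat m \<in> carrier_mat m (m - 1)"
  by (auto simp: shift_mat_def shift_up_mat_def drop_first_mat_def push_first_mat_def
      drop_last_mat_def append_last_mat_def)

lemma shift_mats_dims:
  "dim_row (shift_mat m) = m" "dim_col (shift_mat m) = m"
  "dim_row (shift_up_mat m) = m" "dim_col (shift_up_mat m) = m"
  "dim_row (drop_first_mat m) = m - 1" "dim_col (drop_first_mat m) = m"
  "dim_row (push_first_mat m) = m" "dim_col (push_first_mat m) = m - 1"
  "dim_row (drop_last_mat m) = m - 1" "dim_col (drop_last_mat m) = m"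
  "dim_row (append_last_mat m) = m" "dim_col (append_last_mat m) = m - 1"
  using shift_mats_carrier[of m] unfolding carrier_mat_def by auto

lemma shift_mat_vec:
  "i < m \<Longrightarrow> z \<in> carrier_vec m \<Longrightarrow> (shift_mat m *\<^sub>v z) $ i = (if i = 0 then 0 else z $ (i - 1))"
  unfolding shift_mat_def by (subst selection_mat_vec) auto
lemma shift_up_mat_vec:
  "i < m \<Longrightarrow> z \<in> carrier_vec m \<Longrightarrow> (shift_up_mat m *\<^sub>v z) $ i = (if Suc i < m then z $ Suc i else 0)"
  unfolding shift_up_mat_def by (subst selection_mat_vec_total) auto
lemma drop_first_mat_vec:
  "i < m - 1 \<Longrightarrow> z \<in> carrier_vec m \<Longrightarrow> (drop_first_mat m *\<^sub>v z) $ i = z $ Suc i"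
  unfolding drop_first_mat_def by (subst selection_mat_vec_total) auto
lemma push_first_mat_vec:
  "i < m \<Longrightarrow> z \<in> carrier_vec (m - 1) \<Longrightarrow>
     (push_first_mat m *\<^sub>v z) $ i = (if i = 0 then 0 else z $ (i - 1))"
  unfolding push_first_mat_def by (subst selection_mat_vec) auto
lemma drop_last_mat_vec:
  "i < m - 1 \<Longrightarrow> z \<in> carrier_vec m \<Longrightarrow> (drop_last_mat m *\<^sub>v z) $ i = z $ i"
  unfolding drop_last_mat_def by (subst selection_mat_vec_total) auto
lemma append_last_mat_vec:
  "i < m \<Longrightarrow> z \<in> carrier_vec (m - 1) \<Longrightarrow>
     (append_last_mat m *\<^sub>v z) $ i = (if i < m - 1 then z $ i else 0)"
  unfolding append_last_mat_def by (subst selection_mat_vec_total) auto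

lemma shift_mat_vec_zero_iff:
  assumes z: "z \<in> carrier_vec m"
  shows "shift_mat m *\<^sub>v z = 0\<^sub>v m \<longleftrightarrow> (\<forall>i < m - 1. z $ i = 0)"
proof
  assume h: "shift_mat m *\<^sub>v z = 0\<^sub>v m"
  show "\<forall>i < m - 1. z $ i = 0"
  proof (intro allI impI)
    fix i assume i: "i < m - 1"
    have "(shift_mat m *\<^sub>v z) $ Suc i = 0" using h i by simp
    then show "z $ i = 0" using i z shift_mat_vec[of "Suc i" m z] by simp
  qed
next
  assume h: "\<forall>i < m - 1. z $ i = 0"
  show "shift_mat m *\<^sub>v z = 0\<^sub>v m"
  proof (rule eq_vecI)
    fix i assume "i < dim_vec (0\<^sub>v m :: complex vec)"
    then show "(shift_mat m *\<^sub>v z) $ i = 0\<^sub>v m $ i" using z h shift_mat_vec[of i m z] by (cases i) auto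
  qed (simp add: shift_mats_dims)
qed

lemma shift_mat_last_unit: "shift_mat m *\<^sub>v unit_vec m (m - 1) = 0\<^sub>v m"
  using shift_mat_vec_zero_iff[of "unit_vec m (m - 1)" m] by simp

lemma shift_shift_up:
  assumes y: "y \<in> carrier_vec m" "y $ 0 = 0"
  shows "shift_mat m *\<^sub>v (shift_up_mat m *\<^sub>v y) = y"
proof (rule eq_vecI)
  fix i assume i: "i < dim_vec y"
  have c: "shift_up_mat m *\<^sub>v y \<in> carrier_vec m" using mult_mat_vec_carrier[OF shift_mats_carrier(2) y(1)] .
  have "i \<noteq> 0 \<Longrightarrow> (shift_up_mat m *\<^sub>v y) $ (i - 1) = y $ i"
    using shift_up_mat_vec[of "i - 1" m y] i y by auto
  then show "(shift_mat m *\<^sub>v (shift_up_mat m *\<^sub>v y)) $ i = y $ i"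
    using shift_mat_vec[of i m "shift_up_mat m *\<^sub>v y"] i y c by (cases "i = 0") auto
qed (use y in \<open>simp add: shift_mats_dims\<close>)

lemma push_drop_first:
  assumes y: "y \<in> carrier_vec m" "y $ 0 = 0"
  shows "push_first_mat m *\<^sub>v (drop_first_mat m *\<^sub>v y) = y"
proof (rule eq_vecI)
  fix i assume i: "i < dim_vec y"
  have tc: "drop_first_mat m *\<^sub>v y \<in> carrier_vec (m - 1)" by (simp add: carrier_dim_vec shift_mats_dims)
  have im: "i < m" using i y by simp
  show "(push_first_mat m *\<^sub>v (drop_first_mat m *\<^sub>v y)) $ i = y $ i"
  proof (cases "i = 0")
    case True then show ?thesis using push_first_mat_vec[OF im tc] y by (simp del: index_mult_mat_vec)
  next
    case False
    then have "(drop_first_mat m *\<^sub>v y) $ (i - 1) = y $ i"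
      using drop_first_mat_vec[of "i - 1" m y] y im by simp
    then show ?thesis using push_first_mat_vec[OF im tc] False by (simp del: index_mult_mat_vec)
  qed
qed (use y in \<open>simp add: shift_mats_dims\<close>)

lemma shift_append_drop_last:
  assumes y: "y \<in> carrier_vec m"
  shows "shift_mat m *\<^sub>v (append_last_mat m *\<^sub>v (drop_last_mat m *\<^sub>v y)) = shift_mat m *\<^sub>v y"
proof (rule eq_vecI)
  fix i assume "i < dim_vec (shift_mat m *\<^sub>v y)"
  then have im: "i < m" by (simp add: shift_mat_def)
  have tc: "drop_last_mat m *\<^sub>v y \<in> carrier_vec (m - 1)" by (simp add: carrier_dim_vec shift_mats_dims)
  have ec: "append_last_mat m *\<^sub>v (drop_last_mat m *\<^sub>v y) \<in> carrier_vec m" by (simp add: carrier_dim_vec shift_mats_dims)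
  show "(shift_mat m *\<^sub>v (append_last_mat m *\<^sub>v (drop_last_mat m *\<^sub>v y))) $ i = (shift_mat m *\<^sub>v y) $ i"
  proof (cases "i = 0")
    case True then show ?thesis using shift_mat_vec[OF im ec] shift_mat_vec[OF im y] by (simp del: index_mult_mat_vec)
  next
    case False
    then have i1: "i - 1 < m - 1" "i - 1 < m" using im by auto
    have "(append_last_mat m *\<^sub>v (drop_last_mat m *\<^sub>v y)) $ (i - 1) = y $ (i - 1)"
      using append_last_mat_vec[OF i1(2) tc] drop_last_mat_vec[OF i1(1) y] i1 by (simp del: index_mult_mat_vec)
    then show ?thesis using shift_mat_vec[OF im ec] shift_mat_vec[OF im y] False by (simp del: index_mult_mat_vec)
  qed
qed (use y in \<open>simp add: shift_mats_dims\<close>)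

lemma shift_mat_iterate:
  assumes z: "z \<in> carrier_vec m" and i: "i < m"
  shows "(((\<lambda>x. shift_mat m *\<^sub>v x) ^^ k) z) $ i = (if k \<le> i then z $ (i - k) else 0)"
  using i
proof (induction k arbitrary: i)
  case 0 then show ?case by simp
next
  case (Suc k)
  have c: "((\<lambda>x. shift_mat m *\<^sub>v x) ^^ k) z \<in> carrier_vec m"
    using funpow_mult_carrier[OF shift_mats_carrier(1) z] .
  show ?case using Suc.prems c Suc.IH[of "i - 1"] by (auto simp: shift_mat_vec)
qed

lemma shift_mat_iterate_to_last:
  assumes y: "y \<in> carrier_vec m" and i: "i < m" and below: "\<And>l. l < i \<Longrightarrow> y $ l = 0"
  shows "((\<lambda>x. shift_mat m *\<^sub>v x) ^^ (m - 1 - i)) y = y $ i \<cdot>\<^sub>v unit_vec m (m - 1)"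
proof (rule eq_vecI)
  fix j assume "j < dim_vec (y $ i \<cdot>\<^sub>v unit_vec m (m - 1))"
  then have jm: "j < m" by simp
  show "((\<lambda>x. shift_mat m *\<^sub>v x) ^^ (m - 1 - i)) y $ j = (y $ i \<cdot>\<^sub>v unit_vec m (m - 1)) $ j"
    using shift_mat_iterate[OF y jm, of "m - 1 - i"] jm i below[of "j - (m - 1 - i)"]
    by (cases "j = m - 1") auto
qed (use funpow_mult_carrier[OF shift_mats_carrier(1) y] in simp)

lemma nilp_order_shift_mat:
  assumes "m \<ge> 1"
  shows "nilp_order (shift_mat m) m m"
proof -
  have "shift_mat m ^\<^sub>m m = 0\<^sub>m m m"
  proof (rule mat_eq_by_action[of _ m m])
    fix v :: "complex vec" assume v: "v \<in> carrier_vec m"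
    show "shift_mat m ^\<^sub>m m *\<^sub>v v = 0\<^sub>m m m *\<^sub>v v"
      using v funpow_mult_carrier[OF shift_mats_carrier(1) v, of m]
      by (subst pow_mat_mult_vec[OF shift_mats_carrier(1) v]) (intro eq_vecI, auto simp: shift_mat_iterate)
  qed auto
  moreover have "shift_mat m ^\<^sub>m (m - 1) \<noteq> 0\<^sub>m m m"
  proof
    assume h: "shift_mat m ^\<^sub>m (m - 1) = 0\<^sub>m m m"
    have "(shift_mat m ^\<^sub>m (m - 1) *\<^sub>v unit_vec m 0) $ (m - 1) = 1"
      using assms by (subst pow_mat_mult_vec[OF shift_mats_carrier(1)]) (auto simp: shift_mat_iterate)
    then show False using h assms by simp
  qed
  ultimately show ?thesis unfolding nilp_order_def by auto
qed

lemma subspace_zero_set: "subspace_of m {0\<^sub>v m}"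
  unfolding subspace_of_def by auto

lemma subspace_carrier_vec: "subspace_of m (carrier_vec m :: complex vec set)"
  unfolding subspace_of_def by auto

lemma subspace_has_zero: "subspace_of m U \<Longrightarrow> 0\<^sub>v m \<in> U"
  unfolding subspace_of_def by auto

lemma subspace_trivial: "subspace_of m U \<Longrightarrow> U \<subseteq> {0\<^sub>v m} \<Longrightarrow> U = {0\<^sub>v m}"
  unfolding subspace_of_def by auto

lemma subspace_span:
  assumes w: "w \<in> carrier_vec m"
  shows "subspace_of m {c \<cdot>\<^sub>v w | c. True}"
  unfolding subspace_of_def
proof (intro conjI ballI allI)
  show "0\<^sub>v m \<in> {c \<cdot>\<^sub>v w |c. True}" using w by (intro CollectI exI[of _ 0]) (auto intro!: eq_vecI)
  fix u v assume "u \<in> {c \<cdot>\<^sub>v w |c. True}" "v \<in> {c \<cdot>\<^sub>v w |c. True}"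
  then obtain a b where "u = a \<cdot>\<^sub>v w" "v = b \<cdot>\<^sub>v w" by auto
  then show "u + v \<in> {c \<cdot>\<^sub>v w |c. True}" using w
    by (intro CollectI exI[of _ "a + b"]) (auto intro!: eq_vecI simp: distrib_right)
next
  fix c u assume "u \<in> {c \<cdot>\<^sub>v w |c. True}"
  then obtain a where "u = a \<cdot>\<^sub>v w" by auto
  then show "c \<cdot>\<^sub>v u \<in> {c \<cdot>\<^sub>v w |c. True}" using w
    by (intro CollectI exI[of _ "c * a"]) (auto intro!: eq_vecI)
qed (use w in auto)

lemma subspace_of_line:
  assumes w: "w \<in> carrier_vec m" and U: "subspace_of m U" and sub: "U \<subseteq> {c \<cdot>\<^sub>v w | c. True}"
  shows "U = {0\<^sub>v m} \<or> U = {c \<cdot>\<^sub>v w | c. True}"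
proof (cases "U \<subseteq> {0\<^sub>v m}")
  case True then show ?thesis using subspace_trivial[OF U] by auto
next
  case False
  then obtain x where x: "x \<in> U" "x \<noteq> 0\<^sub>v m" by auto
  then obtain a where a: "x = a \<cdot>\<^sub>v w" using sub by auto
  have a0: "a \<noteq> 0" using a x w by auto
  have "{c \<cdot>\<^sub>v w |c. True} \<subseteq> U"
  proof
    fix y assume "y \<in> {c \<cdot>\<^sub>v w |c. True}"
    then obtain b where b: "y = b \<cdot>\<^sub>v w" by auto
    have "(b / a) \<cdot>\<^sub>v x \<in> U" using U x unfolding subspace_of_def by auto
    moreover have "(b / a) \<cdot>\<^sub>v x = y" using a b a0 w by (auto intro!: eq_vecI)
    ultimately show "y \<in> U" by simp
  qed
  then show ?thesis using sub by auto
qed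

lemma subspace_sum:
  assumes U: "subspace_of m U" and W: "subspace_of m W"
  shows "subspace_of m {u + w | u w. u \<in> U \<and> w \<in> W}"
proof -
  have Uc: "U \<subseteq> carrier_vec m" and Wc: "W \<subseteq> carrier_vec m" using U W unfolding subspace_of_def by auto
  show ?thesis unfolding subspace_of_def
  proof (intro conjI ballI allI)
    show "{u + w |u w. u \<in> U \<and> w \<in> W} \<subseteq> carrier_vec m" using Uc Wc by (auto intro!: add_carrier_vec)
    show "0\<^sub>v m \<in> {u + w |u w. u \<in> U \<and> w \<in> W}"
      using U W subspace_has_zero by (intro CollectI exI[of _ "0\<^sub>v m"]) auto
  next
    fix x y assume "x \<in> {u + w |u w. u \<in> U \<and> w \<in> W}" "y \<in> {u + w |u w. u \<in> U \<and> w \<in> W}"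
    then obtain u1 w1 u2 w2 where xy: "x = u1 + w1" "y = u2 + w2" "u1 \<in> U" "u2 \<in> U" "w1 \<in> W" "w2 \<in> W"
      by auto
    have "dim_vec u1 = m" "dim_vec u2 = m" "dim_vec w1 = m" "dim_vec w2 = m" using xy Uc Wc by auto
    then have "x + y = (u1 + u2) + (w1 + w2)" using xy by (intro eq_vecI) auto
    moreover have "u1 + u2 \<in> U" "w1 + w2 \<in> W" using U W xy unfolding subspace_of_def by auto
    ultimately show "x + y \<in> {u + w |u w. u \<in> U \<and> w \<in> W}" by blast
  next
    fix c x assume "x \<in> {u + w |u w. u \<in> U \<and> w \<in> W}"
    then obtain u1 w1 where xy: "x = u1 + w1" "u1 \<in> U" "w1 \<in> W" by auto
    have "dim_vec u1 = m" "dim_vec w1 = m" using xy Uc Wc by auto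
    then have "c \<cdot>\<^sub>v x = c \<cdot>\<^sub>v u1 + c \<cdot>\<^sub>v w1" using xy by (intro eq_vecI) (auto simp: distrib_left)
    moreover have "c \<cdot>\<^sub>v u1 \<in> U" "c \<cdot>\<^sub>v w1 \<in> W" using U W xy unfolding subspace_of_def by auto
    ultimately show "c \<cdot>\<^sub>v x \<in> {u + w |u w. u \<in> U \<and> w \<in> W}" by blast
  qed
qed

lemma carrier_vec_0: "carrier_vec 0 = {0\<^sub>v 0 :: complex vec}"
  by (auto intro!: eq_vecI)

lemma subquot_isoI:
  assumes "submod T K0 K1" "submod T W0 W1" "W0 \<subseteq> K0" "W1 \<subseteq> K1"
    "lin_on K0 f0" "lin_on K1 f1" "f0 ` K0 = carrier_vec (dim0 T')" "f1 ` K1 = carrier_vec (dim1 T')"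
    "\<forall>v\<in>K0. f0 v = 0\<^sub>v (dim0 T') \<longleftrightarrow> v \<in> W0"
    "\<forall>v\<in>K1. f1 v = 0\<^sub>v (dim1 T') \<longleftrightarrow> v \<in> W1"
    "\<forall>v\<in>K0. f1 (ta T *\<^sub>v v) = ta T' *\<^sub>v f0 v \<and> f1 (tb T *\<^sub>v v) = tb T' *\<^sub>v f0 v"
    "\<forall>w\<in>K1. f0 (tas T *\<^sub>v w) = tas T' *\<^sub>v f1 w \<and> f0 (tbs T *\<^sub>v w) = tbs T' *\<^sub>v f1 w"
  shows "subquot_iso T K0 K1 W0 W1 T'"
  unfolding subquot_iso_def using assms by blast

lemma exists_last_nonzero:
  fixes f :: "nat \<Rightarrow> 'a"
  shows "f 0 \<noteq> z \<Longrightarrow> f m = z \<Longrightarrow> \<exists>k. f k \<noteq> z \<and> f (Suc k) = z"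
  by (induction m) auto

subsection \<open>The Krylov basis of a nilpotent matrix of maximal order\<close>

definition krylov_mat :: "complex mat \<Rightarrow> complex vec \<Rightarrow> nat \<Rightarrow> complex mat" where
  "krylov_mat N u n = mat n n (\<lambda>(i, j). (((\<lambda>x. N *\<^sub>v x) ^^ j) u) $ i)"

lemma krylov_mat_carrier: "krylov_mat N u n \<in> carrier_mat n n"
  by (simp add: krylov_mat_def)

lemma col_krylov_mat:
  assumes N: "N \<in> carrier_mat n n" and u: "u \<in> carrier_vec n" and j: "j < n"
  shows "col (krylov_mat N u n) j = ((\<lambda>x. N *\<^sub>v x) ^^ j) u"
  unfolding krylov_mat_def using j funpow_mult_carrier[OF N u, of j] by (intro eq_vecI) auto

lemma krylov_mat_intertwines:
  assumes N: "N \<in> carrier_mat n n" and u: "u \<in> carrier_vec n" and nil: "N ^\<^sub>m n = 0\<^sub>m n n"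
  shows "N * krylov_mat N u n = krylov_mat N u n * shift_mat n"
proof (rule mat_col_eqI)
  let ?K = "krylov_mat N u n"
  have K: "?K \<in> carrier_mat n n" by (rule krylov_mat_carrier)
  fix j assume "j < dim_col (?K * shift_mat n)"
  then have j: "j < n" by (simp add: shift_mats_dims)
  have l: "col (N * ?K) j = ((\<lambda>x. N *\<^sub>v x) ^^ Suc j) u"
    using col_mult2[OF N K j] col_krylov_mat[OF N u j] by simp
  have colJ: "col (shift_mat n) j = (if Suc j < n then unit_vec n (Suc j) else 0\<^sub>v n)"
    unfolding shift_mat_def using j by (intro eq_vecI) (auto simp: unit_vec_def)
  have r: "col (?K * shift_mat n) j = ?K *\<^sub>v col (shift_mat n) j"
    using col_mult2[OF K shift_mats_carrier(1) j] .
  show "col (N * ?K) j = col (?K * shift_mat n) j"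
  proof (cases "Suc j < n")
    case True
    then show ?thesis using l r colJ mult_mat_unit_vec[OF K True] col_krylov_mat[OF N u True] by simp
  next
    case False
    then have "Suc j = n" using j by simp
    then have "((\<lambda>x. N *\<^sub>v x) ^^ Suc j) u = 0\<^sub>v n" using pow_mat_mult_vec[OF N u, of n] nil u by simp
    then show ?thesis using l r colJ False K by simp
  qed
qed (use N in \<open>auto simp: krylov_mat_def shift_mats_dims\<close>)

lemma krylov_mat_iterate:
  assumes N: "N \<in> carrier_mat n n" and u: "u \<in> carrier_vec n" and nil: "N ^\<^sub>m n = 0\<^sub>m n n"
    and x: "x \<in> carrier_vec n"
  shows "((\<lambda>x. N *\<^sub>v x) ^^ k) (krylov_mat N u n *\<^sub>v x)
    = krylov_mat N u n *\<^sub>v (((\<lambda>x. shift_mat n *\<^sub>v x) ^^ k) x)"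
proof (induction k)
  case 0 then show ?case by simp
next
  case (Suc k)
  let ?K = "krylov_mat N u n" and ?y = "((\<lambda>x. shift_mat n *\<^sub>v x) ^^ k) x"
  have K: "?K \<in> carrier_mat n n" by (rule krylov_mat_carrier)
  have y: "?y \<in> carrier_vec n" using funpow_mult_carrier[OF shift_mats_carrier(1) x] .
  have "N *\<^sub>v (?K *\<^sub>v ?y) = (N * ?K) *\<^sub>v ?y" using N K y by simp
  also have "\<dots> = (?K * shift_mat n) *\<^sub>v ?y" using krylov_mat_intertwines[OF N u nil] by simp
  also have "\<dots> = ?K *\<^sub>v (shift_mat n *\<^sub>v ?y)" by (rule assoc_mult_mat_vec[OF K shift_mats_carrier(1) y])
  finally show ?case using Suc by simp
qed

text \<open>If moreover N^(n-1) u \<noteq> 0, the Krylov vectors are linearly independent: apply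
  N^(n-1-i) to a relation whose lowest nonzero coefficient sits at i.\<close>
lemma krylov_mat_injective:
  assumes N: "N \<in> carrier_mat n n" and u: "u \<in> carrier_vec n" and nil: "N ^\<^sub>m n = 0\<^sub>m n n"
    and top: "N ^\<^sub>m (n - 1) *\<^sub>v u \<noteq> 0\<^sub>v n"
    and y: "y \<in> carrier_vec n" and Ky: "krylov_mat N u n *\<^sub>v y = 0\<^sub>v n"
  shows "y = 0\<^sub>v n"
proof (rule ccontr)
  let ?K = "krylov_mat N u n"
  have K: "?K \<in> carrier_mat n n" by (rule krylov_mat_carrier)
  assume "y \<noteq> 0\<^sub>v n"
  then have ex: "\<exists>i. i < n \<and> y $ i \<noteq> 0" using y by (auto simp: vec_eq_iff)
  define i where "i = (LEAST i. i < n \<and> y $ i \<noteq> 0)"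
  have i: "i < n" "y $ i \<noteq> 0" using LeastI_ex[OF ex] unfolding i_def by auto
  have below: "l < i \<Longrightarrow> y $ l = 0" for l
    using not_less_Least[of l "\<lambda>i. i < n \<and> y $ i \<noteq> 0"] i(1) unfolding i_def by auto
  have zero_iter: "((\<lambda>x. N *\<^sub>v x) ^^ k) (0\<^sub>v n) = 0\<^sub>v n" for k by (induction k) (use N in auto)
  have "0\<^sub>v n = ((\<lambda>x. N *\<^sub>v x) ^^ (n - 1 - i)) (?K *\<^sub>v y)" using Ky zero_iter by simp
  also have "\<dots> = ?K *\<^sub>v (y $ i \<cdot>\<^sub>v unit_vec n (n - 1))"
    using krylov_mat_iterate[OF N u nil y] shift_mat_iterate_to_last[OF y i(1) below] by simp
  also have "\<dots> = y $ i \<cdot>\<^sub>v (?K *\<^sub>v unit_vec n (n - 1))" using mult_mat_vec[OF K unit_vec_carrier] .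
  also have "?K *\<^sub>v unit_vec n (n - 1) = N ^\<^sub>m (n - 1) *\<^sub>v u"
    using mult_mat_unit_vec[OF K] col_krylov_mat[OF N u] pow_mat_mult_vec[OF N u] i(1) by simp
  finally have "y $ i \<cdot>\<^sub>v (N ^\<^sub>m (n - 1) *\<^sub>v u) = 0\<^sub>v n" by simp
  then have "N ^\<^sub>m (n - 1) *\<^sub>v u = 0\<^sub>v n" using i(2) N u by (auto simp: vec_eq_iff)
  then show False using top by simp
qed

lemma nilpotent_max_order_jordan_basis:
  fixes N :: "complex mat"
  assumes N: "N \<in> carrier_mat n n" and nil: "N ^\<^sub>m n = 0\<^sub>m n n" and nz: "N ^\<^sub>m (n - 1) \<noteq> 0\<^sub>m n n"
  shows "\<exists>P Q. P \<in> carrier_mat n n \<and> Q \<in> carrier_mat n n \<and> P * Q = 1\<^sub>m n \<and> Q * P = 1\<^sub>m n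
    \<and> N * P = P * shift_mat n"
proof -
  obtain u where u: "u \<in> carrier_vec n" "N ^\<^sub>m (n - 1) *\<^sub>v u \<noteq> 0\<^sub>v n"
  proof -
    have "\<exists>u \<in> carrier_vec n. N ^\<^sub>m (n - 1) *\<^sub>v u \<noteq> 0\<^sub>v n"
    proof (rule ccontr)
      assume "\<not> ?thesis"
      then have "N ^\<^sub>m (n - 1) = 0\<^sub>m n n" using N by (intro mat_eq_by_action[of _ n n]) auto
      then show False using nz by simp
    qed
    then show ?thesis using that by blast
  qed
  let ?P = "krylov_mat N u n"
  have P: "?P \<in> carrier_mat n n" by (rule krylov_mat_carrier)
  have "det ?P \<noteq> 0"
    using det_0_iff_vec_prod_zero_field[OF P] krylov_mat_injective[OF N u(1) nil u(2)] by auto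
  from det_non_zero_imp_unit[OF P this, of "()"]
  obtain Q where Q: "Q \<in> carrier_mat n n" "Q * ?P = 1\<^sub>m n" "?P * Q = 1\<^sub>m n"
    unfolding Units_def ring_mat_def by auto
  show ?thesis using P Q krylov_mat_intertwines[OF N u(1) nil] by blast
qed

lemma is_module_carriers:
  assumes "is_module T"
  shows "ta T \<in> carrier_mat (dim1 T) (dim0 T)" "tb T \<in> carrier_mat (dim1 T) (dim0 T)"
    "tas T \<in> carrier_mat (dim0 T) (dim1 T)" "tbs T \<in> carrier_mat (dim0 T) (dim1 T)"
  using assms unfolding is_module_def by auto

definition arrow :: "rep \<Rightarrow> bool \<Rightarrow> bool \<Rightarrow> complex mat" where
  "arrow T i c = (if i then (if c then tas T else tbs T) else (if c then ta T else tb T))"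

lemma pathmat_Cons: "pathmat T i (c # cs) = pathmat T (\<not> i) cs * arrow T i c"
  by (cases i) (simp_all add: arrow_def)

lemma square_rep_carriers:
  assumes "ta T \<in> carrier_mat m m" "tb T \<in> carrier_mat m m" "tas T \<in> carrier_mat m m"
    "tbs T \<in> carrier_mat m m" "dim0 T = m" "dim1 T = m"
  shows "arrow T i c \<in> carrier_mat m m" "pathmat T i cs \<in> carrier_mat m m"
proof -
  show arrow: "arrow T i c \<in> carrier_mat m m" for i c using assms by (simp add: arrow_def)
  show "pathmat T i cs \<in> carrier_mat m m"
  proof (induction cs arbitrary: i)
    case Nil then show ?case using assms by (cases i) simp_all
  next
    case (Cons c cs) show ?case unfolding pathmat_Cons by (rule mult_carrier_mat[OF Cons.IH arrow])
  qed
qed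

subsection \<open>A module of I^l(n) in Jordan coordinates\<close>

locale Il_coordinates =
  fixes T :: rep and n :: nat and Ai P Q :: "complex mat"
  assumes n_pos: "1 \<le> n" and module: "is_module T"
    and dim0[simp]: "dim0 T = n" and dim1[simp]: "dim1 T = n"
    and Ai_carrier[simp]: "Ai \<in> carrier_mat n n" and A_Ai: "ta T * Ai = 1\<^sub>m n" and Ai_A: "Ai * ta T = 1\<^sub>m n"
    and P_carrier[simp]: "P \<in> carrier_mat n n" and Q_carrier[simp]: "Q \<in> carrier_mat n n"
    and P_Q: "P * Q = 1\<^sub>m n" and Q_P: "Q * P = 1\<^sub>m n"
    and N_P: "(tbs T * ta T) * P = P * shift_mat n"
    and N_nilpotent: "(tbs T * ta T) ^\<^sub>m n = 0\<^sub>m n n"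
begin

abbreviation "A \<equiv> ta T"
abbreviation "B \<equiv> tb T"
abbreviation "X \<equiv> tas T"
abbreviation "Y \<equiv> tbs T"
abbreviation "N \<equiv> Y * A"
abbreviation "J \<equiv> shift_mat n"
abbreviation "V \<equiv> carrier_vec n :: complex vec set"

lemma arrows_carrier[simp]:
  "A \<in> carrier_mat n n" "B \<in> carrier_mat n n" "X \<in> carrier_mat n n" "Y \<in> carrier_mat n n"
  "N \<in> carrier_mat n n"
  using is_module_carriers[OF module] by auto

lemma square_mult_carrier[simp]:
  "M \<in> carrier_mat n n \<Longrightarrow> M' \<in> carrier_mat n n \<Longrightarrow> M * M' \<in> carrier_mat n n"
  "M \<in> carrier_mat n n \<Longrightarrow> v \<in> carrier_vec n \<Longrightarrow> M *\<^sub>v v \<in> carrier_vec n"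
  by (rule mult_carrier_mat mult_mat_vec_carrier; assumption)+

lemma square_mult_zero_vec[simp]: "M \<in> carrier_mat n n \<Longrightarrow> M *\<^sub>v 0\<^sub>v n = 0\<^sub>v n"
  by (rule mult_mat_zero_vec)

lemma mats_dims[simp]: "dim_row A = n" "dim_col A = n" "dim_row B = n" "dim_col B = n"
  "dim_row X = n" "dim_col X = n" "dim_row Y = n" "dim_col Y = n"
  "dim_row Ai = n" "dim_col Ai = n" "dim_row P = n" "dim_col P = n" "dim_row Q = n" "dim_col Q = n"
  "dim_row J = n" "dim_col J = n"
  using arrows_carrier Ai_carrier P_carrier Q_carrier shift_mats_carrier(1)[of n]
  unfolding carrier_mat_def by auto

lemma preproj_rel1: "A * X + B * Y = 0\<^sub>m n n" and preproj_rel0: "X * A + Y * B = 0\<^sub>m n n"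
  using module unfolding is_module_def by auto

lemma P_Q_vec: "v \<in> V \<Longrightarrow> P *\<^sub>v (Q *\<^sub>v v) = v"
  using P_Q by (subst assoc_mult_mat_vec[symmetric, of _ n n _ n]) auto
lemma Q_P_vec: "v \<in> V \<Longrightarrow> Q *\<^sub>v (P *\<^sub>v v) = v"
  using Q_P by (subst assoc_mult_mat_vec[symmetric, of _ n n _ n]) auto
lemma A_Ai_vec: "v \<in> V \<Longrightarrow> A *\<^sub>v (Ai *\<^sub>v v) = v"
  using A_Ai by (subst assoc_mult_mat_vec[symmetric, of _ n n _ n]) auto
lemma Ai_A_vec: "v \<in> V \<Longrightarrow> Ai *\<^sub>v (A *\<^sub>v v) = v"
  using Ai_A by (subst assoc_mult_mat_vec[symmetric, of _ n n _ n]) auto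

lemma N_P_vec: "v \<in> V \<Longrightarrow> Y *\<^sub>v (A *\<^sub>v (P *\<^sub>v v)) = P *\<^sub>v (J *\<^sub>v v)"
proof -
  assume v: "v \<in> V"
  have "Y *\<^sub>v (A *\<^sub>v (P *\<^sub>v v)) = (N * P) *\<^sub>v v" using v by (simp add: assoc_mult_mat_vec[of _ n n _ n])
  also have "\<dots> = (P * J) *\<^sub>v v" using N_P by simp
  also have "\<dots> = P *\<^sub>v (J *\<^sub>v v)" using v by (subst assoc_mult_mat_vec[of _ n n _ n]) auto
  finally show ?thesis .
qed

lemma P_J_Q_vec: "v \<in> V \<Longrightarrow> P *\<^sub>v (J *\<^sub>v (Q *\<^sub>v v)) = Y *\<^sub>v (A *\<^sub>v v)"
  using N_P_vec[of "Q *\<^sub>v v"] P_Q_vec[of v] by simp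

lemma X_via_Y_right: "w \<in> V \<Longrightarrow> X *\<^sub>v w = - (Y *\<^sub>v (B *\<^sub>v (Ai *\<^sub>v w)))"
proof -
  assume w: "w \<in> V"
  have "(X * A + Y * B) *\<^sub>v (Ai *\<^sub>v w) = 0\<^sub>v n" using preproj_rel0 w by simp
  moreover have "(X * A + Y * B) *\<^sub>v (Ai *\<^sub>v w) = (X * A) *\<^sub>v (Ai *\<^sub>v w) + (Y * B) *\<^sub>v (Ai *\<^sub>v w)"
    using w by (intro add_mult_distrib_mat_vec[of _ n n]) auto
  ultimately have "X *\<^sub>v (A *\<^sub>v (Ai *\<^sub>v w)) + Y *\<^sub>v (B *\<^sub>v (Ai *\<^sub>v w)) = 0\<^sub>v n"
    using w by (simp add: assoc_mult_mat_vec[of _ n n _ n])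
  then show ?thesis using w A_Ai_vec by (intro eq_uminus_of_add_eq_zero[of _ n]) auto
qed

lemma X_via_Y_left: "w \<in> V \<Longrightarrow> X *\<^sub>v w = - (Ai *\<^sub>v (B *\<^sub>v (Y *\<^sub>v w)))"
proof -
  assume w: "w \<in> V"
  have "Ai *\<^sub>v ((A * X + B * Y) *\<^sub>v w) = 0\<^sub>v n" using preproj_rel1 w by simp
  moreover have "(A * X + B * Y) *\<^sub>v w = (A * X) *\<^sub>v w + (B * Y) *\<^sub>v w"
    using w by (intro add_mult_distrib_mat_vec[of _ n n]) auto
  moreover have "Ai *\<^sub>v ((A * X) *\<^sub>v w + (B * Y) *\<^sub>v w) = Ai *\<^sub>v ((A * X) *\<^sub>v w) + Ai *\<^sub>v ((B * Y) *\<^sub>v w)"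
    using w by (intro mult_add_distrib_mat_vec[of _ n n]) auto
  ultimately have "Ai *\<^sub>v (A *\<^sub>v (X *\<^sub>v w)) + Ai *\<^sub>v (B *\<^sub>v (Y *\<^sub>v w)) = 0\<^sub>v n"
    using w by (simp add: assoc_mult_mat_vec[of _ n n _ n])
  then show ?thesis using w Ai_A_vec by (intro eq_uminus_of_add_eq_zero[of _ n]) auto
qed

abbreviation "Nf \<equiv> (\<lambda>x. Y *\<^sub>v (A *\<^sub>v x))"

lemma N_iterate_carrier: "x \<in> V \<Longrightarrow> (Nf ^^ k) x \<in> V"
  by (induction k) auto

lemma N_iterate_add: "a \<in> V \<Longrightarrow> b \<in> V \<Longrightarrow> (Nf ^^ k) (a + b) = (Nf ^^ k) a + (Nf ^^ k) b"
  by (induction k) (auto simp: N_iterate_carrier mult_add_distrib_mat_vec[of _ n n])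

lemma N_iterate_pow: "v \<in> V \<Longrightarrow> (Nf ^^ k) v = (N ^\<^sub>m k) *\<^sub>v v"
proof (induction k arbitrary: v)
  case 0 then show ?case by simp
next
  case (Suc k)
  have "(Nf ^^ Suc k) v = (Nf ^^ k) (Y *\<^sub>v (A *\<^sub>v v))"
    by (simp add: funpow_Suc_right del: funpow.simps)
  also have "\<dots> = (N ^\<^sub>m k) *\<^sub>v (N *\<^sub>v v)" using Suc by (simp add: assoc_mult_mat_vec[of _ n n _ n])
  also have "\<dots> = (N ^\<^sub>m Suc k) *\<^sub>v v" using Suc.prems
    by (simp add: assoc_mult_mat_vec[of "N ^\<^sub>m k" n n N n] del: assoc_mult_mat_vec)
  finally show ?case .
qed

lemma N_iterate_vanishes: "v \<in> V \<Longrightarrow> (Nf ^^ n) v = 0\<^sub>v n"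
  using N_iterate_pow N_nilpotent by simp

subsection \<open>The socle\<close>

definition Soc1 :: "complex vec set" where
  "Soc1 = {w \<in> V. Y *\<^sub>v w = 0\<^sub>v n}"

lemma Soc1_carrier: "w \<in> Soc1 \<Longrightarrow> w \<in> V"
  by (simp add: Soc1_def)

text \<open>Y w = P J (Q Ai w): the coordinates of w are those of V_0 transported by t_alpha.\<close>
lemma Y_coords: "w \<in> V \<Longrightarrow> Y *\<^sub>v w = P *\<^sub>v (J *\<^sub>v (Q *\<^sub>v (Ai *\<^sub>v w)))"
  using P_J_Q_vec[of "Ai *\<^sub>v w"] A_Ai_vec[of w] by simp

lemma P_vec_zero_iff: "z \<in> V \<Longrightarrow> P *\<^sub>v z = 0\<^sub>v n \<longleftrightarrow> z = 0\<^sub>v n"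
  using Q_P_vec[of z] by auto

lemma Soc1_coords: "w \<in> V \<Longrightarrow> w \<in> Soc1 \<longleftrightarrow> (\<forall>i < n - 1. (Q *\<^sub>v (Ai *\<^sub>v w)) $ i = 0)"
  using Y_coords[of w] unfolding Soc1_def by (simp add: P_vec_zero_iff shift_mat_vec_zero_iff)

lemma Soc1_last_coord_zero:
  assumes w: "w \<in> Soc1" and last: "(Q *\<^sub>v (Ai *\<^sub>v w)) $ (n - 1) = 0"
  shows "w = 0\<^sub>v n"
proof -
  have wV: "w \<in> V" using w by (rule Soc1_carrier)
  have "Q *\<^sub>v (Ai *\<^sub>v w) = 0\<^sub>v n"
  proof (rule eq_vecI)
    fix i assume "i < dim_vec (0\<^sub>v n :: complex vec)"
    then have "i < n - 1 \<or> i = n - 1" by auto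
    then show "(Q *\<^sub>v (Ai *\<^sub>v w)) $ i = 0\<^sub>v n $ i"
      using Soc1_coords[OF wV] w last n_pos by (auto simp del: index_mult_mat_vec)
  qed simp
  then have "A *\<^sub>v (P *\<^sub>v (Q *\<^sub>v (Ai *\<^sub>v w))) = 0\<^sub>v n" by simp
  then show ?thesis using P_Q_vec A_Ai_vec wV by simp
qed

lemma Soc1_subspace: "subspace_of n Soc1"
  unfolding subspace_of_def Soc1_def
  by (auto simp: mult_add_distrib_mat_vec[of _ n n] mult_mat_vec[of _ n n])

lemma X_Soc1: "w \<in> Soc1 \<Longrightarrow> X *\<^sub>v w = 0\<^sub>v n"
  using X_via_Y_left[of w] unfolding Soc1_def by auto

text \<open>(0, ker Y) is a submodule; it will turn out to be the socle.\<close>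
lemma submod_Soc1: "submod T {0\<^sub>v n} Soc1"
  unfolding submod_def using subspace_zero_set Soc1_subspace X_Soc1
  by (auto simp: Soc1_def subspace_of_def)

lemma simple_line_in_Soc1:
  assumes w: "w \<in> Soc1" "w \<noteq> 0\<^sub>v n"
  shows "simple_submod T {0\<^sub>v n} {c \<cdot>\<^sub>v w | c. True}"
proof -
  let ?L = "{c \<cdot>\<^sub>v w | c. True}"
  have wV: "w \<in> V" using w(1) by (rule Soc1_carrier)
  have L_Soc1: "?L \<subseteq> Soc1" using Soc1_subspace w(1) unfolding subspace_of_def by auto
  have "\<forall>x\<in>?L. X *\<^sub>v x \<in> {0\<^sub>v n} \<and> Y *\<^sub>v x \<in> {0\<^sub>v n}"
    using L_Soc1 X_Soc1 by (auto simp: Soc1_def)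
  moreover have "\<forall>v\<in>{0\<^sub>v n}. A *\<^sub>v v \<in> ?L \<and> B *\<^sub>v v \<in> ?L"
    using subspace_has_zero[OF subspace_span[OF wV]] by simp
  ultimately have sm: "submod T {0\<^sub>v n} ?L"
    unfolding submod_def using subspace_zero_set subspace_span[OF wV] by simp
  have w_in: "w \<in> ?L" by (intro CollectI exI[of _ 1]) auto
  show ?thesis unfolding simple_submod_def
  proof (intro conjI allI impI)
    fix X0 X1 assume h: "submod T X0 X1 \<and> X0 \<subseteq> {0\<^sub>v n} \<and> X1 \<subseteq> ?L"
    then have s0: "subspace_of n X0" and s1: "subspace_of n X1" unfolding submod_def by auto
    have "X0 = {0\<^sub>v n}" using subspace_trivial[OF s0] h by blast
    moreover have "X1 = {0\<^sub>v n} \<or> X1 = ?L" using subspace_of_line[OF wV s1] h by blast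
    ultimately show "X0 = {0\<^sub>v (dim0 T)} \<and> X1 = {0\<^sub>v (dim1 T)} \<or> X0 = {0\<^sub>v n} \<and> X1 = ?L" by auto
  qed (use sm w w_in in auto)
qed

text \<open>Every nonzero submodule meets (0, ker Y): its V_1-part is nonzero (t_alpha is injective),
  and applying t_alpha t_beta* repeatedly to a nonzero vector there eventually lands in ker Y
  since N is nilpotent.\<close>
lemma submod_meets_Soc1:
  assumes sm: "submod T U0 U1" and nz: "U0 \<noteq> {0\<^sub>v n} \<or> U1 \<noteq> {0\<^sub>v n}"
  shows "U1 \<inter> Soc1 \<noteq> {0\<^sub>v n}"
proof -
  have s0: "subspace_of n U0" and s1: "subspace_of n U1" using sm unfolding submod_def by auto
  have U1V: "U1 \<subseteq> V" using s1 unfolding subspace_of_def by auto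
  have AU: "v \<in> U0 \<Longrightarrow> A *\<^sub>v v \<in> U1" for v using sm unfolding submod_def by auto
  have YU: "w \<in> U1 \<Longrightarrow> Y *\<^sub>v w \<in> U0" for w using sm unfolding submod_def by auto
  obtain w where w: "w \<in> U1" "w \<noteq> 0\<^sub>v n"
  proof (cases "U1 \<subseteq> {0\<^sub>v n}")
    case False then show ?thesis using that by auto
  next
    case True
    then have "U0 \<noteq> {0\<^sub>v n}" using nz subspace_trivial[OF s1] by auto
    then obtain v where v: "v \<in> U0" "v \<noteq> 0\<^sub>v n" using subspace_has_zero[OF s0] by auto
    have "v \<in> V" using v s0 unfolding subspace_of_def by auto
    then have "A *\<^sub>v v \<noteq> 0\<^sub>v n" using Ai_A_vec[of v] v by auto
    then show ?thesis using that AU v by auto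
  qed
  define s where "s k = ((\<lambda>x. A *\<^sub>v (Y *\<^sub>v x)) ^^ k) w" for k
  have sU: "s k \<in> U1" for k by (induction k) (auto simp: s_def w AU YU)
  have sV: "s k \<in> V" for k using sU U1V by auto
  have Ys: "Y *\<^sub>v s k = (Nf ^^ k) (Y *\<^sub>v w)" for k by (induction k) (auto simp: s_def)
  have "s (Suc n) = 0\<^sub>v n"
    using Ys[of n] N_iterate_vanishes[of "Y *\<^sub>v w"] w U1V by (auto simp: s_def)
  then obtain k where k: "s k \<noteq> 0\<^sub>v n" "s (Suc k) = 0\<^sub>v n"
    using exists_last_nonzero[of s] w(2) by (auto simp: s_def)
  have "A *\<^sub>v (Y *\<^sub>v s k) = 0\<^sub>v n" using k(2) by (simp add: s_def)
  then have "Y *\<^sub>v s k = 0\<^sub>v n" using Ai_A_vec[of "Y *\<^sub>v s k"] sV by simp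
  then have "s k \<in> U1 \<inter> Soc1" using sU sV by (auto simp: Soc1_def)
  then show ?thesis using k by auto
qed

lemma simple_submod_in_Soc1:
  assumes S: "simple_submod T U0 U1"
  shows "U0 = {0\<^sub>v n} \<and> U1 \<subseteq> Soc1"
proof -
  have sm: "submod T U0 U1" and nz: "U0 \<noteq> {0\<^sub>v n} \<or> U1 \<noteq> {0\<^sub>v n}"
    and minimal: "\<forall>X0 X1. submod T X0 X1 \<and> X0 \<subseteq> U0 \<and> X1 \<subseteq> U1 \<longrightarrow>
        (X0 = {0\<^sub>v n} \<and> X1 = {0\<^sub>v n}) \<or> (X0 = U0 \<and> X1 = U1)"
    using S unfolding simple_submod_def by auto
  have s0: "subspace_of n U0" and s1: "subspace_of n U1" using sm unfolding submod_def by auto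
  have "subspace_of n (U1 \<inter> Soc1)" using s1 Soc1_subspace unfolding subspace_of_def by auto
  then have "submod T {0\<^sub>v n} (U1 \<inter> Soc1)"
    unfolding submod_def using subspace_zero_set X_Soc1 subspace_has_zero[OF s1]
      subspace_has_zero[OF Soc1_subspace]
    by (auto simp: Soc1_def)
  moreover have "{0\<^sub>v n} \<subseteq> U0" using subspace_has_zero[OF s0] by simp
  ultimately have "U1 \<inter> Soc1 = {0\<^sub>v n} \<or> ({0\<^sub>v n} = U0 \<and> U1 \<inter> Soc1 = U1)"
    using minimal[rule_format, of "{0\<^sub>v n}" "U1 \<inter> Soc1"] by simp
  then show ?thesis using submod_meets_Soc1[OF sm nz] by auto
qed

lemma soc0_eq: "soc0 T = {0\<^sub>v n}"
proof -
  have "{0\<^sub>v n} \<in> {S. subspace_of (dim0 T) S \<and> (\<forall>U0 U1. simple_submod T U0 U1 \<longrightarrow> U0 \<subseteq> S)}"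
    using subspace_zero_set simple_submod_in_Soc1 by auto
  moreover have "\<forall>S \<in> {S. subspace_of (dim0 T) S \<and> (\<forall>U0 U1. simple_submod T U0 U1 \<longrightarrow> U0 \<subseteq> S)}.
      0\<^sub>v n \<in> S"
    using subspace_has_zero by auto
  ultimately show ?thesis unfolding soc0_def by blast
qed

lemma soc1_eq: "soc1 T = Soc1"
proof -
  have "Soc1 \<in> {S. subspace_of (dim1 T) S \<and> (\<forall>U0 U1. simple_submod T U0 U1 \<longrightarrow> U1 \<subseteq> S)}"
    using Soc1_subspace simple_submod_in_Soc1 by auto
  moreover have "Soc1 \<subseteq> S"
    if S: "S \<in> {S. subspace_of (dim1 T) S \<and> (\<forall>U0 U1. simple_submod T U0 U1 \<longrightarrow> U1 \<subseteq> S)}" for S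
  proof
    fix w assume w: "w \<in> Soc1"
    show "w \<in> S"
    proof (cases "w = 0\<^sub>v n")
      case True then show ?thesis using S subspace_has_zero by auto
    next
      case False
      then have "{c \<cdot>\<^sub>v w | c. True} \<subseteq> S" using S simple_line_in_Soc1[OF w] by auto
      moreover have "w \<in> {c \<cdot>\<^sub>v w | c. True}" by (intro CollectI exI[of _ 1]) auto
      ultimately show ?thesis by auto
    qed
  qed
  ultimately show ?thesis unfolding soc1_def by blast
qed

definition soc_coord :: "complex vec \<Rightarrow> complex vec" where
  "soc_coord w = vec 1 (\<lambda>_. (Q *\<^sub>v (Ai *\<^sub>v w)) $ (n - 1))"

lemma Q_Ai_linear:
  "u \<in> V \<Longrightarrow> v \<in> V \<Longrightarrow> Q *\<^sub>v (Ai *\<^sub>v (u + v)) = Q *\<^sub>v (Ai *\<^sub>v u) + Q *\<^sub>v (Ai *\<^sub>v v)"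
  "u \<in> V \<Longrightarrow> Q *\<^sub>v (Ai *\<^sub>v (c \<cdot>\<^sub>v u)) = c \<cdot>\<^sub>v (Q *\<^sub>v (Ai *\<^sub>v u))"
  by (simp_all add: mult_add_distrib_mat_vec[of _ n n] mult_mat_vec[of _ n n])

lemma soc_coord_linear: "lin_on Soc1 soc_coord"
  unfolding lin_on_def
proof (intro conjI ballI allI)
  fix u v assume u: "u \<in> Soc1" and v: "v \<in> Soc1"
  show "soc_coord (u + v) = soc_coord u + soc_coord v"
    unfolding soc_coord_def using Q_Ai_linear(1)[OF Soc1_carrier[OF u] Soc1_carrier[OF v]] n_pos
      Soc1_carrier[OF u] Soc1_carrier[OF v]
    by (intro eq_vecI) (simp_all del: index_mult_mat_vec)
next
  fix c u assume u: "u \<in> Soc1"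
  show "soc_coord (c \<cdot>\<^sub>v u) = c \<cdot>\<^sub>v soc_coord u"
    unfolding soc_coord_def using Q_Ai_linear(2)[OF Soc1_carrier[OF u]] n_pos Soc1_carrier[OF u]
    by (intro eq_vecI) (simp_all del: index_mult_mat_vec)
qed

lemma soc_coord_image: "soc_coord ` Soc1 = carrier_vec 1"
proof
  show "soc_coord ` Soc1 \<subseteq> carrier_vec 1" unfolding soc_coord_def by auto
  show "carrier_vec 1 \<subseteq> soc_coord ` Soc1"
  proof
    fix z :: "complex vec" assume z: "z \<in> carrier_vec 1"
    define w0 where "w0 = A *\<^sub>v (P *\<^sub>v unit_vec n (n - 1))"
    have w0V: "w0 \<in> V" unfolding w0_def by simp
    have "Y *\<^sub>v w0 = 0\<^sub>v n" unfolding w0_def using N_P_vec[of "unit_vec n (n - 1)"] shift_mat_last_unit by simp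
    then have "(z $ 0) \<cdot>\<^sub>v w0 \<in> Soc1" using Soc1_subspace w0V unfolding subspace_of_def Soc1_def by auto
    moreover have "soc_coord ((z $ 0) \<cdot>\<^sub>v w0) = z"
    proof -
      have "Q *\<^sub>v (Ai *\<^sub>v w0) = unit_vec n (n - 1)" unfolding w0_def using Ai_A_vec Q_P_vec by simp
      then show ?thesis unfolding soc_coord_def using z w0V n_pos Q_Ai_linear(2)[OF w0V, of "z $ 0"]
        by (auto intro!: eq_vecI simp del: index_mult_mat_vec)
    qed
    ultimately show "z \<in> soc_coord ` Soc1" by (metis image_eqI)
  qed
qed

lemma soc_coord_kernel: "w \<in> Soc1 \<Longrightarrow> soc_coord w = 0\<^sub>v 1 \<longleftrightarrow> w = 0\<^sub>v n"
proof
  assume w: "w \<in> Soc1" and "soc_coord w = 0\<^sub>v 1"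
  then have "soc_coord w $ 0 = 0" by simp
  then have "(Q *\<^sub>v (Ai *\<^sub>v w)) $ (n - 1) = 0" unfolding soc_coord_def by simp
  then show "w = 0\<^sub>v n" using Soc1_last_coord_zero w by simp
next
  assume "w = 0\<^sub>v n"
  then show "soc_coord w = 0\<^sub>v 1" unfolding soc_coord_def using n_pos by (auto intro!: eq_vecI)
qed

theorem iso_S1: "subquot_iso T (soc0 T) (soc1 T) {0\<^sub>v (dim0 T)} {0\<^sub>v (dim1 T)} S1"
proof -
  define f0 :: "complex vec \<Rightarrow> complex vec" where "f0 = (\<lambda>_. 0\<^sub>v 0)"
  have zero_submod: "submod T {0\<^sub>v n} {0\<^sub>v n}" unfolding submod_def using subspace_zero_set by simp
  have lin0: "lin_on {0\<^sub>v n} f0" unfolding lin_on_def f0_def by (auto intro!: eq_vecI)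
  have im0: "f0 ` {0\<^sub>v n} = carrier_vec (dim0 S1)" using carrier_vec_0 by (simp add: f0_def S1_def)
  have im1: "soc_coord ` Soc1 = carrier_vec (dim1 S1)" using soc_coord_image by (simp add: S1_def)
  have ker0: "\<forall>v\<in>{0\<^sub>v n}. f0 v = 0\<^sub>v (dim0 S1) \<longleftrightarrow> v \<in> {0\<^sub>v n}" by (simp add: f0_def S1_def)
  have ker1: "\<forall>w\<in>Soc1. soc_coord w = 0\<^sub>v (dim1 S1) \<longleftrightarrow> w \<in> {0\<^sub>v n}"
    using soc_coord_kernel by (simp add: S1_def)
  have c1: "\<forall>v\<in>{0\<^sub>v n}. soc_coord (A *\<^sub>v v) = ta S1 *\<^sub>v f0 v \<and> soc_coord (B *\<^sub>v v) = tb S1 *\<^sub>v f0 v"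
    unfolding soc_coord_def f0_def S1_def using n_pos by (auto intro!: eq_vecI)
  have c2: "\<forall>w\<in>Soc1. f0 (X *\<^sub>v w) = tas S1 *\<^sub>v soc_coord w \<and> f0 (Y *\<^sub>v w) = tbs S1 *\<^sub>v soc_coord w"
    unfolding soc_coord_def f0_def S1_def by (auto intro!: eq_vecI)
  show ?thesis unfolding soc0_eq soc1_eq dim0 dim1
    by (rule subquot_isoI[OF submod_Soc1 zero_submod _ _ lin0 soc_coord_linear im0 im1 ker0 ker1 c1 c2])
       (use subspace_has_zero[OF Soc1_subspace] in auto)
qed

subsection \<open>The radical and the top\<close>

text \<open>The vectors of V_0 with vanishing first coordinate: the image of N.\<close>
definition Rad0 :: "complex vec set" where
  "Rad0 = {v \<in> V. (Q *\<^sub>v v) $ 0 = 0}"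

lemma Rad0_carrier: "v \<in> Rad0 \<Longrightarrow> v \<in> V"
  by (simp add: Rad0_def)

lemma Q_linear:
  "u \<in> V \<Longrightarrow> v \<in> V \<Longrightarrow> Q *\<^sub>v (u + v) = Q *\<^sub>v u + Q *\<^sub>v v"
  "u \<in> V \<Longrightarrow> Q *\<^sub>v (c \<cdot>\<^sub>v u) = c \<cdot>\<^sub>v (Q *\<^sub>v u)"
  "u \<in> V \<Longrightarrow> Q *\<^sub>v (- u) = - (Q *\<^sub>v u)"
  by (simp_all add: mult_add_distrib_mat_vec[of _ n n] mult_mat_vec[of _ n n] mult_mat_uminus_vec[of _ n n])

lemma Rad0_subspace: "subspace_of n Rad0"
  unfolding subspace_of_def Rad0_def using n_pos by (auto simp: Q_linear simp del: index_mult_mat_vec)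

text \<open>Both arrows into V_0 land in Rad0: t_beta* w = N (Ai w) and t_alpha* = - t_beta* B Ai.\<close>
lemma Y_Rad0: "w \<in> V \<Longrightarrow> Y *\<^sub>v w \<in> Rad0"
proof -
  assume w: "w \<in> V"
  have "Q *\<^sub>v (Y *\<^sub>v w) = J *\<^sub>v (Q *\<^sub>v (Ai *\<^sub>v w))" using Y_coords[OF w] Q_P_vec w by simp
  then show ?thesis unfolding Rad0_def using w n_pos shift_mat_vec[of 0 n "Q *\<^sub>v (Ai *\<^sub>v w)"]
    by (simp del: index_mult_mat_vec)
qed

lemma X_Rad0: "w \<in> V \<Longrightarrow> X *\<^sub>v w \<in> Rad0"
proof -
  assume w: "w \<in> V"
  have "Y *\<^sub>v (B *\<^sub>v (Ai *\<^sub>v w)) \<in> Rad0" using Y_Rad0 w by simp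
  then show ?thesis unfolding X_via_Y_right[OF w] Rad0_def using w n_pos Q_linear(3)[of "Y *\<^sub>v (B *\<^sub>v (Ai *\<^sub>v w))"]
    by (simp del: index_mult_mat_vec)
qed

lemma submod_Rad0: "submod T Rad0 V"
  unfolding submod_def using Rad0_subspace subspace_carrier_vec X_Rad0 Y_Rad0 Rad0_carrier by auto

text \<open>(Rad0, V_1) has codimension one, hence is a maximal submodule.\<close>
lemma maximal_Rad0: "maximal_submod T Rad0 V"
  unfolding maximal_submod_def dim0 dim1
proof (intro conjI allI impI)
  show "submod T Rad0 V" by (rule submod_Rad0)
  have "P *\<^sub>v unit_vec n 0 \<notin> Rad0"
    unfolding Rad0_def using Q_P_vec[of "unit_vec n 0"] n_pos by (simp del: index_mult_mat_vec)
  then show "Rad0 \<noteq> V \<or> V \<noteq> V" by auto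
  fix X0 X1 assume h: "submod T X0 X1 \<and> Rad0 \<subseteq> X0 \<and> V \<subseteq> X1"
  then have s0: "subspace_of n X0" and s1: "subspace_of n X1" unfolding submod_def by auto
  have X1: "X1 = V" using h s1 unfolding subspace_of_def by auto
  show "X0 = Rad0 \<and> X1 = V \<or> X0 = V \<and> X1 = V"
  proof (cases "X0 \<subseteq> Rad0")
    case True then show ?thesis using h X1 by auto
  next
    case False
    then obtain x where x: "x \<in> X0" "x \<notin> Rad0" by auto
    have xV: "x \<in> V" using x s0 unfolding subspace_of_def by auto
    have qx: "(Q *\<^sub>v x) $ 0 \<noteq> 0" using x xV by (simp add: Rad0_def)
    have "V \<subseteq> X0"
    proof
      fix v assume v: "v \<in> V"
      define c where "c = (Q *\<^sub>v v) $ 0 / (Q *\<^sub>v x) $ 0"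
      define r where "r = v + (- c) \<cdot>\<^sub>v x"
      have rV: "r \<in> V" using v xV by (simp add: r_def)
      have "(Q *\<^sub>v r) $ 0 = (Q *\<^sub>v v) $ 0 + (- c) * (Q *\<^sub>v x) $ 0"
        unfolding r_def using v xV n_pos Q_linear(1)[of v "(- c) \<cdot>\<^sub>v x"] Q_linear(2)[of x "- c"]
        by (simp del: index_mult_mat_vec)
      also have "\<dots> = 0" using qx by (simp add: c_def)
      finally have "r \<in> X0" using rV h by (auto simp: Rad0_def)
      moreover have "c \<cdot>\<^sub>v x \<in> X0" using s0 x unfolding subspace_of_def by auto
      ultimately have "r + c \<cdot>\<^sub>v x \<in> X0" using s0 unfolding subspace_of_def by auto
      moreover have "r + c \<cdot>\<^sub>v x = v" unfolding r_def using v xV by (intro eq_vecI) auto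
      ultimately show "v \<in> X0" by simp
    qed
    then show ?thesis using X1 s0 unfolding subspace_of_def by auto
  qed
qed

lemma Rad0_in_image_N: "r \<in> Rad0 \<Longrightarrow> r = Nf (P *\<^sub>v (shift_up_mat n *\<^sub>v (Q *\<^sub>v r)))"
proof -
  assume r: "r \<in> Rad0"
  have rV: "r \<in> V" using r by (rule Rad0_carrier)
  have "Nf (P *\<^sub>v (shift_up_mat n *\<^sub>v (Q *\<^sub>v r))) = P *\<^sub>v (J *\<^sub>v (shift_up_mat n *\<^sub>v (Q *\<^sub>v r)))"
    using N_P_vec rV by simp
  also have "\<dots> = P *\<^sub>v (Q *\<^sub>v r)" using shift_shift_up[of "Q *\<^sub>v r"] r rV by (simp add: Rad0_def)
  also have "\<dots> = r" using P_Q_vec rV by simp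
  finally show ?thesis by simp
qed

text \<open>Nakayama's argument: if U0 + Rad0 = V_0 for a submodule (U0, U1), then, as Rad0 lies
  in the image of N, V_0 = U0 + N V_0 = U0 + N^k V_0 for all k.\<close>
lemma decompose_modulo_N_power:
  assumes sm: "submod T U0 U1" and full: "{u + r | u r. u \<in> U0 \<and> r \<in> Rad0} = V"
  shows "\<forall>v\<in>V. \<exists>u\<in>U0. \<exists>x\<in>V. v = u + (Nf ^^ k) x"
proof -
  have s0: "subspace_of n U0" using sm unfolding submod_def by auto
  have U0V: "U0 \<subseteq> V" using s0 unfolding subspace_of_def by auto
  have N_U0: "u \<in> U0 \<Longrightarrow> (Nf ^^ j) u \<in> U0" for u j
    using sm by (induction j) (auto simp: submod_def)
  show ?thesis
  proof (induction k)
    case 0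
    show ?case
    proof
      fix v assume "v \<in> V"
      then show "\<exists>u\<in>U0. \<exists>x\<in>V. v = u + (Nf ^^ 0) x"
        using subspace_has_zero[OF s0] by (intro bexI[of _ "0\<^sub>v n"] bexI[of _ v]) auto
    qed
  next
    case (Suc k)
    show ?case
    proof
      fix v assume v: "v \<in> V"
      obtain u x where ux: "u \<in> U0" "x \<in> V" "v = u + (Nf ^^ k) x" using Suc v by blast
      obtain u' r' where ur: "x = u' + r'" "u' \<in> U0" "r' \<in> Rad0" using full ux(2) by blast
      define x' where "x' = P *\<^sub>v (shift_up_mat n *\<^sub>v (Q *\<^sub>v r'))"
      have x'V: "x' \<in> V" using ur Rad0_carrier by (simp add: x'_def)
      have r': "r' = Nf x'" using Rad0_in_image_N[OF ur(3)] by (simp add: x'_def)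
      have u'V: "u' \<in> V" "r' \<in> V" using ur U0V Rad0_carrier by auto
      have "(Nf ^^ k) x = (Nf ^^ k) u' + (Nf ^^ Suc k) x'"
        using N_iterate_add[OF u'V] ur r' by (simp add: funpow_Suc_right del: funpow.simps)
      moreover have "(u + (Nf ^^ k) u') + (Nf ^^ Suc k) x' = u + ((Nf ^^ k) u' + (Nf ^^ Suc k) x')"
        using ux u'V x'V U0V N_iterate_carrier by (intro assoc_add_vec) auto
      ultimately have "v = (u + (Nf ^^ k) u') + (Nf ^^ Suc k) x'" using ux by simp
      moreover have "u + (Nf ^^ k) u' \<in> U0" using N_U0 ur ux s0 unfolding subspace_of_def by auto
      ultimately show "\<exists>u\<in>U0. \<exists>x\<in>V. v = u + (Nf ^^ Suc k) x" using x'V by blast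
    qed
  qed
qed

text \<open>Taking k = n, where N^n = 0, gives U0 = V_0.\<close>
lemma sum_with_Rad0_full:
  assumes sm: "submod T U0 U1" and full: "{u + r | u r. u \<in> U0 \<and> r \<in> Rad0} = V"
  shows "U0 = V"
proof -
  have U0V: "U0 \<subseteq> V" using sm unfolding submod_def subspace_of_def by auto
  have "V \<subseteq> U0"
  proof
    fix v assume v: "v \<in> V"
    obtain u x where "u \<in> U0" "x \<in> V" "v = u + (Nf ^^ n) x"
      using decompose_modulo_N_power[OF sm full, of n] v by blast
    then show "v \<in> U0" using N_iterate_vanishes U0V by auto
  qed
  then show ?thesis using U0V by auto
qed

lemma submod_sum_Rad0:
  assumes sm: "submod T U0 U1"
  defines "S \<equiv> {u + r | u r. u \<in> U0 \<and> r \<in> Rad0}"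
  shows "submod T S V" "U0 \<subseteq> S" "Rad0 \<subseteq> S"
proof -
  have s0: "subspace_of n U0" using sm unfolding submod_def by auto
  have sS: "subspace_of n S" unfolding S_def by (rule subspace_sum[OF s0 Rad0_subspace])
  show Rad0_S: "Rad0 \<subseteq> S"
  proof
    fix r assume r: "r \<in> Rad0"
    then have "r = 0\<^sub>v n + r" using Rad0_carrier by auto
    then show "r \<in> S" using r subspace_has_zero[OF s0] unfolding S_def by blast
  qed
  show "U0 \<subseteq> S"
  proof
    fix u assume u: "u \<in> U0"
    then have "u = u + 0\<^sub>v n" using s0 unfolding subspace_of_def by auto
    then show "u \<in> S" using u subspace_has_zero[OF Rad0_subspace] unfolding S_def by blast
  qed
  show "submod T S V"
    using sS subspace_carrier_vec Rad0_S X_Rad0 Y_Rad0 unfolding submod_def subspace_of_def by auto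
qed

text \<open>A maximal submodule contains Rad0 and all of V_1: otherwise its sum with (Rad0, V_1)
  would be everything, forcing the submodule itself to be everything.\<close>
lemma maximal_submod_contains_Rad0:
  assumes M: "maximal_submod T U0 U1"
  shows "Rad0 \<subseteq> U0 \<and> U1 = V"
proof -
  let ?S = "{u + r | u r. u \<in> U0 \<and> r \<in> Rad0}"
  have sm: "submod T U0 U1" and proper: "U0 \<noteq> V \<or> U1 \<noteq> V"
    and maximal: "\<forall>X0 X1. submod T X0 X1 \<and> U0 \<subseteq> X0 \<and> U1 \<subseteq> X1 \<longrightarrow>
        (X0 = U0 \<and> X1 = U1) \<or> (X0 = V \<and> X1 = V)"
    using M unfolding maximal_submod_def by auto
  have U1V: "U1 \<subseteq> V" using sm unfolding submod_def subspace_of_def by auto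
  have "(?S = U0 \<and> V = U1) \<or> (?S = V \<and> V = V)"
    using maximal submod_sum_Rad0[OF sm] U1V by blast
  moreover have "?S \<noteq> V"
  proof
    assume "?S = V"
    then have U0: "U0 = V" using sum_with_Rad0_full[OF sm] by blast
    have "V \<subseteq> U1"
    proof
      fix w assume w: "w \<in> V"
      then have "A *\<^sub>v (Ai *\<^sub>v w) \<in> U1" using sm U0 unfolding submod_def by simp
      then show "w \<in> U1" using A_Ai_vec w by simp
    qed
    then show False using proper U0 U1V by auto
  qed
  ultimately show ?thesis using submod_sum_Rad0(3)[OF sm] by auto
qed

lemma rad0_eq: "rad0 T = Rad0"
proof -
  have "Rad0 \<in> {U0. \<exists>U1. maximal_submod T U0 U1}" using maximal_Rad0 by auto
  moreover have "Rad0 \<subseteq> U0" if "U0 \<in> {U0. \<exists>U1. maximal_submod T U0 U1}" for U0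
    using that maximal_submod_contains_Rad0 by auto
  moreover have "Rad0 \<subseteq> V" using Rad0_carrier by auto
  ultimately show ?thesis unfolding rad0_def dim0 by blast
qed

lemma rad1_eq: "rad1 T = V"
  unfolding rad1_def dim1 using maximal_submod_contains_Rad0 by auto

definition top_coord :: "complex vec \<Rightarrow> complex vec" where
  "top_coord v = vec 1 (\<lambda>_. (Q *\<^sub>v v) $ 0)"

lemma top_coord_linear: "lin_on V top_coord"
  unfolding lin_on_def top_coord_def using n_pos
  by (auto intro!: eq_vecI simp: Q_linear simp del: index_mult_mat_vec)

lemma top_coord_image: "top_coord ` V = carrier_vec 1"
proof
  show "top_coord ` V \<subseteq> carrier_vec 1" unfolding top_coord_def by auto
  show "carrier_vec 1 \<subseteq> top_coord ` V"
  proof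
    fix z :: "complex vec" assume z: "z \<in> carrier_vec 1"
    have "top_coord ((z $ 0) \<cdot>\<^sub>v (P *\<^sub>v unit_vec n 0)) = z"
      unfolding top_coord_def using z n_pos Q_linear(2)[of "P *\<^sub>v unit_vec n 0" "z $ 0"] Q_P_vec[of "unit_vec n 0"]
      by (auto intro!: eq_vecI simp del: index_mult_mat_vec)
    moreover have "(z $ 0) \<cdot>\<^sub>v (P *\<^sub>v unit_vec n 0) \<in> V" by simp
    ultimately show "z \<in> top_coord ` V" by (metis image_eqI)
  qed
qed

lemma top_coord_kernel: "v \<in> V \<Longrightarrow> top_coord v = 0\<^sub>v 1 \<longleftrightarrow> v \<in> Rad0"
proof
  assume v: "v \<in> V" and "top_coord v = 0\<^sub>v 1"
  then have "top_coord v $ 0 = 0" by simp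
  then show "v \<in> Rad0" using v unfolding top_coord_def Rad0_def by simp
next
  assume "v \<in> Rad0"
  then show "top_coord v = 0\<^sub>v 1" unfolding top_coord_def Rad0_def by (auto intro!: eq_vecI)
qed

theorem iso_S0: "subquot_iso T (carrier_vec (dim0 T)) (carrier_vec (dim1 T)) (rad0 T) (rad1 T) S0"
proof -
  define f1 :: "complex vec \<Rightarrow> complex vec" where "f1 = (\<lambda>_. 0\<^sub>v 0)"
  have full_submod: "submod T V V" unfolding submod_def using subspace_carrier_vec by simp
  have lin1: "lin_on V f1" unfolding lin_on_def f1_def by (auto intro!: eq_vecI)
  have im0: "top_coord ` V = carrier_vec (dim0 S0)" using top_coord_image by (simp add: S0_def)
  have "f1 ` V = {0\<^sub>v 0}" unfolding f1_def using zero_carrier_vec[of n] by blast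
  then have im1: "f1 ` V = carrier_vec (dim1 S0)" using carrier_vec_0 by (simp add: S0_def)
  have ker0: "\<forall>v\<in>V. top_coord v = 0\<^sub>v (dim0 S0) \<longleftrightarrow> v \<in> Rad0" using top_coord_kernel by (simp add: S0_def)
  have ker1: "\<forall>v\<in>V. f1 v = 0\<^sub>v (dim1 S0) \<longleftrightarrow> v \<in> V" by (auto simp: f1_def S0_def)
  have c1: "\<forall>v\<in>V. f1 (A *\<^sub>v v) = ta S0 *\<^sub>v top_coord v \<and> f1 (B *\<^sub>v v) = tb S0 *\<^sub>v top_coord v"
    unfolding f1_def S0_def by (auto intro!: eq_vecI)
  have c2: "\<forall>w\<in>V. top_coord (X *\<^sub>v w) = tas S0 *\<^sub>v f1 w \<and> top_coord (Y *\<^sub>v w) = tbs S0 *\<^sub>v f1 w"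
  proof
    fix w assume w: "w \<in> V"
    have "top_coord (X *\<^sub>v w) = 0\<^sub>v 1" "top_coord (Y *\<^sub>v w) = 0\<^sub>v 1"
      using top_coord_kernel X_Rad0[OF w] Y_Rad0[OF w] w by auto
    then show "top_coord (X *\<^sub>v w) = tas S0 *\<^sub>v f1 w \<and> top_coord (Y *\<^sub>v w) = tbs S0 *\<^sub>v f1 w"
      unfolding f1_def S0_def by (auto intro!: eq_vecI)
  qed
  show ?thesis unfolding rad0_eq rad1_eq dim0 dim1
    by (rule subquot_isoI[OF full_submod submod_Rad0 _ _ top_coord_linear lin1 im0 im1 ker0 ker1 c1 c2])
       (use Rad0_carrier in auto)
qed

subsection \<open>The subquotient rad T / soc T\<close>

text \<open>The reduced dimension n - 1, kept as a constant so that it is not rewritten.\<close>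
definition m :: nat where "m = n - 1"

lemma n_Suc_m: "n = Suc m"
  using n_pos by (simp add: m_def)

abbreviation "W \<equiv> carrier_vec m :: complex vec set"

lemma cut_mats_carrier[simp]:
  "drop_first_mat n \<in> carrier_mat m n" "drop_last_mat n \<in> carrier_mat m n"
  "push_first_mat n \<in> carrier_mat n m" "append_last_mat n \<in> carrier_mat n m"
  using shift_mats_carrier[of n] by (auto simp: m_def)

lemma cut_mats_dims[simp]:
  "dim_row (drop_first_mat n) = m" "dim_col (drop_first_mat n) = n"
  "dim_row (drop_last_mat n) = m" "dim_col (drop_last_mat n) = n"
  "dim_row (push_first_mat n) = n" "dim_col (push_first_mat n) = m"
  "dim_row (append_last_mat n) = n" "dim_col (append_last_mat n) = m"
  using cut_mats_carrier unfolding carrier_mat_def by auto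

lemma cut_mats_vec_carrier[simp]:
  "v \<in> V \<Longrightarrow> drop_first_mat n *\<^sub>v v \<in> W" "v \<in> V \<Longrightarrow> drop_last_mat n *\<^sub>v v \<in> W"
  "z \<in> W \<Longrightarrow> push_first_mat n *\<^sub>v z \<in> V" "z \<in> W \<Longrightarrow> append_last_mat n *\<^sub>v z \<in> V"
  by (rule mult_mat_vec_carrier; simp)+

lemma cut_mats_vec:
  "i < m \<Longrightarrow> z \<in> V \<Longrightarrow> (drop_first_mat n *\<^sub>v z) $ i = z $ Suc i"
  "i < m \<Longrightarrow> z \<in> V \<Longrightarrow> (drop_last_mat n *\<^sub>v z) $ i = z $ i"
  "i < n \<Longrightarrow> z \<in> W \<Longrightarrow> (push_first_mat n *\<^sub>v z) $ i = (if i = 0 then 0 else z $ (i - 1))"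
  "i < n \<Longrightarrow> z \<in> W \<Longrightarrow> (append_last_mat n *\<^sub>v z) $ i = (if i < m then z $ i else 0)"
  using drop_first_mat_vec[of i n z] drop_last_mat_vec[of i n z] push_first_mat_vec[of i n z]
    append_last_mat_vec[of i n z]
  by (simp_all add: m_def)

text \<open>Coordinates on the subquotient: on Rad0 drop the (vanishing) first coordinate of Q v,
  on V_1 drop the last coordinate of Q Ai w (the one detecting ker Y); the lifts are sections.\<close>
definition red0 :: "complex vec \<Rightarrow> complex vec" where
  "red0 v = drop_first_mat n *\<^sub>v (Q *\<^sub>v v)"
definition red1 :: "complex vec \<Rightarrow> complex vec" where
  "red1 w = drop_last_mat n *\<^sub>v (Q *\<^sub>v (Ai *\<^sub>v w))"
definition lift0 :: "complex vec \<Rightarrow> complex vec" where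
  "lift0 z = P *\<^sub>v (push_first_mat n *\<^sub>v z)"
definition lift1 :: "complex vec \<Rightarrow> complex vec" where
  "lift1 z = A *\<^sub>v (P *\<^sub>v (append_last_mat n *\<^sub>v z))"

lemma red_lift_carrier[simp]:
  "v \<in> V \<Longrightarrow> red0 v \<in> W" "v \<in> V \<Longrightarrow> red1 v \<in> W" "z \<in> W \<Longrightarrow> lift0 z \<in> V" "z \<in> W \<Longrightarrow> lift1 z \<in> V"
  unfolding red0_def red1_def lift0_def lift1_def by simp_all

lemma red_zero: "red0 (0\<^sub>v n) = 0\<^sub>v m" "red1 (0\<^sub>v n) = 0\<^sub>v m"
  unfolding red0_def red1_def by (simp_all add: mult_mat_zero_vec[of _ m n])

lemma red0_linear: "u \<in> V \<Longrightarrow> v \<in> V \<Longrightarrow> red0 (u + v) = red0 u + red0 v" "u \<in> V \<Longrightarrow> red0 (c \<cdot>\<^sub>v u) = c \<cdot>\<^sub>v red0 u"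
  unfolding red0_def by (simp_all add: Q_linear mult_add_distrib_mat_vec[of _ m n] mult_mat_vec[of _ m n])
lemma red1_linear: "u \<in> V \<Longrightarrow> v \<in> V \<Longrightarrow> red1 (u + v) = red1 u + red1 v" "u \<in> V \<Longrightarrow> red1 (c \<cdot>\<^sub>v u) = c \<cdot>\<^sub>v red1 u"
  unfolding red1_def by (simp_all add: Q_Ai_linear mult_add_distrib_mat_vec[of _ m n] mult_mat_vec[of _ m n])

lemma lift0_Rad0: "z \<in> W \<Longrightarrow> lift0 z \<in> Rad0"
  unfolding Rad0_def lift0_def using Q_P_vec n_pos cut_mats_vec(3)[of 0 z] by (simp del: index_mult_mat_vec)

lemma red0_lift0: "z \<in> W \<Longrightarrow> red0 (lift0 z) = z"
proof (rule eq_vecI)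
  fix i assume z: "z \<in> W" and i: "i < dim_vec z"
  then have i': "i < m" "Suc i < n" using n_Suc_m by auto
  show "red0 (lift0 z) $ i = z $ i" unfolding red0_def lift0_def
    using Q_P_vec[of "push_first_mat n *\<^sub>v z"] z i'
      cut_mats_vec(1)[of i "Q *\<^sub>v (P *\<^sub>v (push_first_mat n *\<^sub>v z))"] cut_mats_vec(3)[of "Suc i" z]
    by (simp del: index_mult_mat_vec)
qed (simp add: red0_def)

lemma lift0_red0: "v \<in> Rad0 \<Longrightarrow> lift0 (red0 v) = v"
proof -
  assume v: "v \<in> Rad0"
  have vV: "v \<in> V" and q: "(Q *\<^sub>v v) $ 0 = 0" using v by (auto simp: Rad0_def)
  have "push_first_mat n *\<^sub>v (drop_first_mat n *\<^sub>v (Q *\<^sub>v v)) = Q *\<^sub>v v"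
    using push_drop_first[of "Q *\<^sub>v v"] vV q by simp
  then show ?thesis unfolding lift0_def red0_def using P_Q_vec[OF vV] by simp
qed

lemma red1_lift1: "z \<in> W \<Longrightarrow> red1 (lift1 z) = z"
proof (rule eq_vecI)
  fix i assume z: "z \<in> W" and i: "i < dim_vec z"
  then have i': "i < m" "i < n" using n_Suc_m by auto
  have "Q *\<^sub>v (Ai *\<^sub>v lift1 z) = append_last_mat n *\<^sub>v z" unfolding lift1_def using Ai_A_vec Q_P_vec z by simp
  then show "red1 (lift1 z) $ i = z $ i" unfolding red1_def
    using z i' cut_mats_vec(2)[of i "Q *\<^sub>v (Ai *\<^sub>v lift1 z)"] cut_mats_vec(4)[of i z]
    by (simp del: index_mult_mat_vec)
qed (simp add: red1_def)

text \<open>lift1 \<circ> red1 changes w only by an element of ker Y, invisible to both arrows out of V_1.\<close>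
lemma Y_lift1_red1: "w \<in> V \<Longrightarrow> Y *\<^sub>v lift1 (red1 w) = Y *\<^sub>v w"
proof -
  assume w: "w \<in> V"
  let ?y = "Q *\<^sub>v (Ai *\<^sub>v w)"
  have "Y *\<^sub>v lift1 (red1 w) = P *\<^sub>v (J *\<^sub>v (append_last_mat n *\<^sub>v (drop_last_mat n *\<^sub>v ?y)))"
    unfolding lift1_def red1_def using N_P_vec w by simp
  also have "\<dots> = P *\<^sub>v (J *\<^sub>v ?y)" using shift_append_drop_last w by simp
  also have "\<dots> = Y *\<^sub>v w" using Y_coords w by simp
  finally show ?thesis .
qed

lemma X_lift1_red1: "w \<in> V \<Longrightarrow> X *\<^sub>v lift1 (red1 w) = X *\<^sub>v w"
  using X_via_Y_left Y_lift1_red1 by simp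

lemma red1_kernel: "w \<in> V \<Longrightarrow> red1 w = 0\<^sub>v m \<longleftrightarrow> w \<in> Soc1"
proof -
  assume w: "w \<in> V"
  have "red1 w = 0\<^sub>v m \<longleftrightarrow> (\<forall>i<m. red1 w $ i = 0)" using w by (auto simp: vec_eq_iff)
  moreover have "\<forall>i<m. red1 w $ i = (Q *\<^sub>v (Ai *\<^sub>v w)) $ i" unfolding red1_def using cut_mats_vec(2) w by simp
  ultimately have "red1 w = 0\<^sub>v m \<longleftrightarrow> (\<forall>i < n - 1. (Q *\<^sub>v (Ai *\<^sub>v w)) $ i = 0)"
    by (simp add: m_def del: index_mult_mat_vec)
  then show ?thesis using Soc1_coords w by simp
qed

lemma red0_kernel: "v \<in> Rad0 \<Longrightarrow> red0 v = 0\<^sub>v m \<longleftrightarrow> v = 0\<^sub>v n"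
proof
  assume v: "v \<in> Rad0" and h: "red0 v = 0\<^sub>v m"
  have "v = lift0 (red0 v)" using lift0_red0 v by simp
  also have "\<dots> = 0\<^sub>v n" unfolding h lift0_def by (simp add: mult_mat_zero_vec[of _ n m])
  finally show "v = 0\<^sub>v n" .
next
  assume "v = 0\<^sub>v n" then show "red0 v = 0\<^sub>v m" using red_zero by simp
qed

lemma red0_image: "red0 ` Rad0 = W"
proof
  show "red0 ` Rad0 \<subseteq> W" using Rad0_carrier by auto
  show "W \<subseteq> red0 ` Rad0"
  proof
    fix z assume z: "z \<in> W"
    then show "z \<in> red0 ` Rad0" using red0_lift0[OF z] lift0_Rad0[OF z] by (metis image_eqI)
  qed
qed

lemma red1_image: "red1 ` V = W"
proof
  show "red1 ` V \<subseteq> W" by auto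
  show "W \<subseteq> red1 ` V"
  proof
    fix z assume z: "z \<in> W"
    then show "z \<in> red1 ` V" using red1_lift1[OF z] red_lift_carrier(4)[OF z] by (metis image_eqI)
  qed
qed

definition Red0 :: "complex mat" where "Red0 = drop_first_mat n * Q"
definition Red1 :: "complex mat" where "Red1 = drop_last_mat n * (Q * Ai)"
definition Lift0 :: "complex mat" where "Lift0 = P * push_first_mat n"
definition Lift1 :: "complex mat" where "Lift1 = A * (P * append_last_mat n)"

definition Tred :: rep where
  "Tred = \<lparr>dim0 = m, dim1 = m, ta = Red1 * (A * Lift0), tb = Red1 * (B * Lift0),
     tas = Red0 * (X * Lift1), tbs = Red0 * (Y * Lift1)\<rparr>"

lemma red_mats_carrier[simp]:
  "Red0 \<in> carrier_mat m n" "Red1 \<in> carrier_mat m n" "Lift0 \<in> carrier_mat n m" "Lift1 \<in> carrier_mat n m"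
  unfolding Red0_def Red1_def Lift0_def Lift1_def
  by (auto intro!: mult_carrier_mat[of _ m n _ n] mult_carrier_mat[of _ n n _ m])

lemma red_mats_vec:
  "v \<in> V \<Longrightarrow> Red0 *\<^sub>v v = red0 v" "v \<in> V \<Longrightarrow> Red1 *\<^sub>v v = red1 v"
  "z \<in> W \<Longrightarrow> Lift0 *\<^sub>v z = lift0 z" "z \<in> W \<Longrightarrow> Lift1 *\<^sub>v z = lift1 z"
proof -
  show "v \<in> V \<Longrightarrow> Red0 *\<^sub>v v = red0 v"
    unfolding Red0_def red0_def by (rule assoc_mult_mat_vec[of _ m n _ n]) auto
  show "v \<in> V \<Longrightarrow> Red1 *\<^sub>v v = red1 v"
    unfolding Red1_def red1_def
    by (simp add: assoc_mult_mat_vec[of "drop_last_mat n" m n _ n] assoc_mult_mat_vec[of Q n n Ai n]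
        del: assoc_mult_mat_vec)
  show "z \<in> W \<Longrightarrow> Lift0 *\<^sub>v z = lift0 z"
    unfolding Lift0_def lift0_def by (rule assoc_mult_mat_vec[of _ n n _ m]) auto
  assume z: "z \<in> W"
  have c: "P * append_last_mat n \<in> carrier_mat n m" by (rule mult_carrier_mat[of _ n n]) simp_all
  have "(A * (P * append_last_mat n)) *\<^sub>v z = A *\<^sub>v ((P * append_last_mat n) *\<^sub>v z)"
    by (rule assoc_mult_mat_vec[of _ n n, OF _ c z]) simp
  also have "(P * append_last_mat n) *\<^sub>v z = P *\<^sub>v (append_last_mat n *\<^sub>v z)"
    by (rule assoc_mult_mat_vec[of _ n n _ m, OF _ _ z]) simp_all
  finally show "Lift1 *\<^sub>v z = lift1 z" unfolding Lift1_def lift1_def .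
qed

lemma Tred_dims[simp]: "dim0 Tred = m" "dim1 Tred = m"
  by (simp_all add: Tred_def)

lemma Tred_carrier:
  "ta Tred \<in> carrier_mat m m" "tb Tred \<in> carrier_mat m m" "tas Tred \<in> carrier_mat m m" "tbs Tred \<in> carrier_mat m m"
  unfolding Tred_def by (auto intro!: mult_carrier_mat[of _ m n _ m] mult_carrier_mat[of _ n n _ m])

lemma conjugate_vec:
  assumes "M \<in> carrier_mat n n" "z \<in> W"
  shows "(Red0 * (M * Lift1)) *\<^sub>v z = red0 (M *\<^sub>v lift1 z)" "(Red1 * (M * Lift0)) *\<^sub>v z = red1 (M *\<^sub>v lift0 z)"
  using assms
  by (simp_all add: assoc_mult_mat_vec[of Red0 m n _ m] assoc_mult_mat_vec[of Red1 m n _ m]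
      assoc_mult_mat_vec[of M n n _ m] red_mats_vec del: assoc_mult_mat_vec)

lemma Tred_vec:
  "z \<in> W \<Longrightarrow> ta Tred *\<^sub>v z = red1 (A *\<^sub>v lift0 z)" "z \<in> W \<Longrightarrow> tb Tred *\<^sub>v z = red1 (B *\<^sub>v lift0 z)"
  "z \<in> W \<Longrightarrow> tas Tred *\<^sub>v z = red0 (X *\<^sub>v lift1 z)" "z \<in> W \<Longrightarrow> tbs Tred *\<^sub>v z = red0 (Y *\<^sub>v lift1 z)"
  unfolding Tred_def by (simp_all add: conjugate_vec)

theorem iso_Tred: "subquot_iso T Rad0 V {0\<^sub>v n} Soc1 Tred"
proof -
  have lin0: "lin_on Rad0 red0" unfolding lin_on_def using red0_linear Rad0_carrier by auto
  have lin1: "lin_on V red1" unfolding lin_on_def using red1_linear by auto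
  have ker0: "\<forall>v\<in>Rad0. red0 v = 0\<^sub>v (dim0 Tred) \<longleftrightarrow> v \<in> {0\<^sub>v n}" using red0_kernel by simp
  have ker1: "\<forall>v\<in>V. red1 v = 0\<^sub>v (dim1 Tred) \<longleftrightarrow> v \<in> Soc1" using red1_kernel by simp
  have c1: "\<forall>v\<in>Rad0. red1 (A *\<^sub>v v) = ta Tred *\<^sub>v red0 v \<and> red1 (B *\<^sub>v v) = tb Tred *\<^sub>v red0 v"
    using Tred_vec(1,2) lift0_red0 Rad0_carrier by simp
  have c2: "\<forall>w\<in>V. red0 (X *\<^sub>v w) = tas Tred *\<^sub>v red1 w \<and> red0 (Y *\<^sub>v w) = tbs Tred *\<^sub>v red1 w"
    using Tred_vec(3,4) X_lift1_red1 Y_lift1_red1 by simp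
  show ?thesis
    by (rule subquot_isoI[OF submod_Rad0 submod_Soc1 _ _ lin0 lin1 _ _ ker0 ker1 c1 c2])
       (use subspace_has_zero[OF Rad0_subspace] Soc1_carrier red0_image red1_image in auto)
qed

subsection \<open>The reduced module lies in I^r(n-1)\<close>

text \<open>The preprojective relations descend to Tred, since the lifts are compatible with the
  arrows up to ker Y (at vertex 1) and exactly (at vertex 0).\<close>
lemma Tred_rel1: "ta Tred * tas Tred + tb Tred * tbs Tred = 0\<^sub>m m m"
proof (rule mat_eq_by_action[of _ m m])
  show "ta Tred * tas Tred + tb Tred * tbs Tred \<in> carrier_mat m m" using Tred_carrier by auto
  show "0\<^sub>m m m \<in> carrier_mat m m" by simp
  fix z :: "complex vec" assume z: "z \<in> W"
  let ?y = "lift1 z"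
  have y: "?y \<in> V" using z by simp
  have "(ta Tred * tas Tred + tb Tred * tbs Tred) *\<^sub>v z = ta Tred *\<^sub>v (tas Tred *\<^sub>v z) + tb Tred *\<^sub>v (tbs Tred *\<^sub>v z)"
    using Tred_carrier z by (simp add: add_mult_distrib_mat_vec[of _ m m] assoc_mult_mat_vec[of _ m m _ m])
  also have "\<dots> = red1 (A *\<^sub>v (X *\<^sub>v ?y)) + red1 (B *\<^sub>v (Y *\<^sub>v ?y))"
    using Tred_vec z y X_Rad0[OF y] Y_Rad0[OF y] Rad0_carrier lift0_red0 by simp
  also have "\<dots> = red1 (A *\<^sub>v (X *\<^sub>v ?y) + B *\<^sub>v (Y *\<^sub>v ?y))" using red1_linear y by simp
  also have "A *\<^sub>v (X *\<^sub>v ?y) + B *\<^sub>v (Y *\<^sub>v ?y) = 0\<^sub>v n"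
  proof -
    have "(A * X + B * Y) *\<^sub>v ?y = (A * X) *\<^sub>v ?y + (B * Y) *\<^sub>v ?y"
      using y by (intro add_mult_distrib_mat_vec[of _ n n]) auto
    then show ?thesis using preproj_rel1 y by (simp add: assoc_mult_mat_vec[of _ n n _ n])
  qed
  finally show "(ta Tred * tas Tred + tb Tred * tbs Tred) *\<^sub>v z = 0\<^sub>m m m *\<^sub>v z" using red_zero z by simp
qed

lemma Tred_rel0: "tas Tred * ta Tred + tbs Tred * tb Tred = 0\<^sub>m m m"
proof (rule mat_eq_by_action[of _ m m])
  show "tas Tred * ta Tred + tbs Tred * tb Tred \<in> carrier_mat m m" using Tred_carrier by auto
  show "0\<^sub>m m m \<in> carrier_mat m m" by simp
  fix z :: "complex vec" assume z: "z \<in> W"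
  let ?v = "lift0 z"
  have v: "?v \<in> V" using z by simp
  have "(tas Tred * ta Tred + tbs Tred * tb Tred) *\<^sub>v z = tas Tred *\<^sub>v (ta Tred *\<^sub>v z) + tbs Tred *\<^sub>v (tb Tred *\<^sub>v z)"
    using Tred_carrier z by (simp add: add_mult_distrib_mat_vec[of _ m m] assoc_mult_mat_vec[of _ m m _ m])
  also have "\<dots> = red0 (X *\<^sub>v (A *\<^sub>v ?v)) + red0 (Y *\<^sub>v (B *\<^sub>v ?v))"
    using Tred_vec z v X_lift1_red1 Y_lift1_red1 by simp
  also have "\<dots> = red0 (X *\<^sub>v (A *\<^sub>v ?v) + Y *\<^sub>v (B *\<^sub>v ?v))" using red0_linear v by simp
  also have "X *\<^sub>v (A *\<^sub>v ?v) + Y *\<^sub>v (B *\<^sub>v ?v) = 0\<^sub>v n"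
  proof -
    have "(X * A + Y * B) *\<^sub>v ?v = (X * A) *\<^sub>v ?v + (Y * B) *\<^sub>v ?v"
      using v by (intro add_mult_distrib_mat_vec[of _ n n]) auto
    then show ?thesis using preproj_rel0 v by (simp add: assoc_mult_mat_vec[of _ n n _ n])
  qed
  finally show "(tas Tred * ta Tred + tbs Tred * tb Tred) *\<^sub>v z = 0\<^sub>m m m *\<^sub>v z" using red_zero z by simp
qed

definition red_space :: "bool \<Rightarrow> complex vec set" where
  "red_space i = (if i then V else Rad0)"
definition red :: "bool \<Rightarrow> complex vec \<Rightarrow> complex vec" where
  "red i = (if i then red1 else red0)"
definition lift :: "bool \<Rightarrow> complex vec \<Rightarrow> complex vec" where
  "lift i = (if i then lift1 else lift0)"

lemma red_space_carrier: "v \<in> red_space i \<Longrightarrow> v \<in> V"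
  using Rad0_carrier by (auto simp: red_space_def split: if_splits)

lemma T_paths_carrier: "arrow T i c \<in> carrier_mat n n" "pathmat T i cs \<in> carrier_mat n n"
  using square_rep_carriers[of T n] by simp_all

lemma Tred_paths_carrier: "arrow Tred i c \<in> carrier_mat m m" "pathmat Tred i cs \<in> carrier_mat m m"
  using square_rep_carriers[of Tred m] Tred_carrier by simp_all

lemma arrow_red:
  assumes v: "v \<in> red_space i"
  shows "arrow T i c *\<^sub>v v \<in> red_space (\<not> i) \<and> arrow Tred i c *\<^sub>v red i v = red (\<not> i) (arrow T i c *\<^sub>v v)"
proof (cases i)
  case False
  then have v0: "v \<in> Rad0" using v by (simp add: red_space_def)
  then have "red0 v \<in> W" using Rad0_carrier by simp
  then show ?thesis using False v0 Rad0_carrier[OF v0] Tred_vec(1,2) lift0_red0[OF v0]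
    by (cases c) (simp_all add: arrow_def red_space_def red_def)
next
  case True
  then have v1: "v \<in> V" using v by (simp add: red_space_def)
  then have "red1 v \<in> W" by simp
  then show ?thesis using True v1 X_Rad0[OF v1] Y_Rad0[OF v1] Tred_vec(3,4) X_lift1_red1[OF v1] Y_lift1_red1[OF v1]
    by (cases c) (simp_all add: arrow_def red_space_def red_def)
qed

lemma path_red:
  "v \<in> red_space i \<Longrightarrow> pathmat T i cs *\<^sub>v v \<in> red_space (if even (length cs) then i else \<not> i) \<and>
     pathmat Tred i cs *\<^sub>v red i v = red (if even (length cs) then i else \<not> i) (pathmat T i cs *\<^sub>v v)"
proof (induction cs arbitrary: i v)
  case Nil
  have "v \<in> V" using red_space_carrier[OF Nil] .
  then show ?case using Nil by (cases i) (auto simp: red_def)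
next
  case (Cons c cs)
  let ?w = "arrow T i c *\<^sub>v v"
  have vV: "v \<in> V" using red_space_carrier[OF Cons.prems] .
  have step: "?w \<in> red_space (\<not> i)" "arrow Tred i c *\<^sub>v red i v = red (\<not> i) ?w"
    using arrow_red[OF Cons.prems] by auto
  have rv: "red i v \<in> W" using vV by (simp add: red_def)
  have T_path: "pathmat T i (c # cs) *\<^sub>v v = pathmat T (\<not> i) cs *\<^sub>v ?w"
    unfolding pathmat_Cons by (rule assoc_mult_mat_vec[OF T_paths_carrier(2,1) vV])
  have Tred_path: "pathmat Tred i (c # cs) *\<^sub>v red i v = pathmat Tred (\<not> i) cs *\<^sub>v red (\<not> i) ?w"
    unfolding pathmat_Cons step(2)[symmetric] by (rule assoc_mult_mat_vec[OF Tred_paths_carrier(2,1) rv])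
  have parity: "(if even (length (c # cs)) then i else \<not> i) = (if even (length cs) then \<not> i else \<not> \<not> i)"
    by simp
  show ?case unfolding parity T_path Tred_path using Cons.IH[OF step(1)] .
qed

lemma module_Tred: "is_module Tred"
proof -
  obtain N0 where N0: "\<forall>i cs. length cs \<ge> N0 \<longrightarrow>
        pathmat T i cs = 0\<^sub>m (dimv T (if even (length cs) then i else \<not> i)) (dimv T i)"
    using module unfolding is_module_def by blast
  have "pathmat Tred i cs = 0\<^sub>m m m" if len: "length cs \<ge> N0" for i cs
  proof (rule mat_eq_by_action[OF Tred_paths_carrier(2)])
    fix z :: "complex vec" assume z: "z \<in> W"
    have lz: "lift i z \<in> red_space i" using lift0_Rad0[OF z] z by (auto simp: lift_def red_space_def)
    have rl: "red i (lift i z) = z" using red0_lift0[OF z] red1_lift1[OF z] by (simp add: red_def lift_def)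
    have "pathmat T i cs = 0\<^sub>m n n" using N0 len by (simp add: dimv_def)
    then have "pathmat Tred i cs *\<^sub>v z = red (if even (length cs) then i else \<not> i) (0\<^sub>v n)"
      using path_red[OF lz, of cs] rl red_space_carrier[OF lz] by simp
    then show "pathmat Tred i cs *\<^sub>v z = 0\<^sub>m m m *\<^sub>v z" using z red_zero by (simp add: red_def)
  qed simp
  then have "\<forall>i cs. length cs \<ge> N0 \<longrightarrow>
      pathmat Tred i cs = 0\<^sub>m (dimv Tred (if even (length cs) then i else \<not> i)) (dimv Tred i)"
    by (simp add: dimv_def)
  then show ?thesis unfolding is_module_def Tred_dims using Tred_carrier Tred_rel1 Tred_rel0 by blast
qed

lemma tbs_Tred: "tbs Tred = 1\<^sub>m m"
proof (rule mat_eq_by_action[of _ m m])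
  show "tbs Tred \<in> carrier_mat m m" using Tred_carrier by simp
  show "1\<^sub>m m \<in> carrier_mat m m" by simp
  fix z :: "complex vec" assume z: "z \<in> W"
  have ec: "append_last_mat n *\<^sub>v z \<in> V" using z by simp
  have jc: "J *\<^sub>v (append_last_mat n *\<^sub>v z) \<in> V" using ec by simp
  have "tbs Tred *\<^sub>v z = drop_first_mat n *\<^sub>v (J *\<^sub>v (append_last_mat n *\<^sub>v z))"
    using Tred_vec(4)[OF z] N_P_vec[OF ec] Q_P_vec[OF jc] by (simp add: red0_def lift1_def)
  also have "\<dots> = z"
  proof (rule eq_vecI)
    fix i assume i: "i < dim_vec z"
    then have i': "i < m" "Suc i < n" "i < n" using z n_Suc_m by auto
    show "(drop_first_mat n *\<^sub>v (J *\<^sub>v (append_last_mat n *\<^sub>v z))) $ i = z $ i"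
      using cut_mats_vec(1)[OF i'(1) jc] shift_mat_vec[OF i'(2) ec] cut_mats_vec(4)[OF i'(3) z] i'
      by (simp del: index_mult_mat_vec)
  qed (use z in simp)
  finally show "tbs Tred *\<^sub>v z = 1\<^sub>m m *\<^sub>v z" using z by simp
qed

lemma ta_Tred: "ta Tred = shift_mat m"
proof (rule mat_eq_by_action[of _ m m])
  show "ta Tred \<in> carrier_mat m m" using Tred_carrier by simp
  show "shift_mat m \<in> carrier_mat m m" by simp
  fix z :: "complex vec" assume z: "z \<in> W"
  have ec: "push_first_mat n *\<^sub>v z \<in> V" using z by simp
  have "ta Tred *\<^sub>v z = drop_last_mat n *\<^sub>v (push_first_mat n *\<^sub>v z)"
    using Tred_vec(1)[OF z] Ai_A_vec[of "P *\<^sub>v (push_first_mat n *\<^sub>v z)"] ec Q_P_vec[OF ec]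
    by (simp add: red1_def lift0_def)
  also have "\<dots> = shift_mat m *\<^sub>v z"
  proof (rule eq_vecI)
    fix i assume "i < dim_vec (shift_mat m *\<^sub>v z)"
    then have i': "i < m" "i < n" using n_Suc_m by (auto simp: shift_mats_dims)
    show "(drop_last_mat n *\<^sub>v (push_first_mat n *\<^sub>v z)) $ i = (shift_mat m *\<^sub>v z) $ i"
      using cut_mats_vec(2)[OF i'(1) ec] shift_mat_vec[OF i'(1) z] cut_mats_vec(3)[OF i'(2) z] i'
      by (simp del: index_mult_mat_vec)
  qed (simp add: shift_mats_dims m_def)
  finally show "ta Tred *\<^sub>v z = shift_mat m *\<^sub>v z" .
qed

theorem Tred_in_Ir: "Tred \<in> I_r (n - 1)"
proof (cases "m = 0")
  case True
  then show ?thesis unfolding I_r_def using module_Tred by (simp add: m_def)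
next
  case False
  have "invertible_mat (1\<^sub>m m :: complex mat)"
    unfolding invertible_mat_def inverts_mat_def by (auto intro!: exI[of _ "1\<^sub>m m"])
  moreover have "ta Tred * tbs Tred = shift_mat m"
    unfolding tbs_Tred ta_Tred by (rule right_mult_one_mat') (simp add: shift_mats_dims)
  moreover have "n - 1 = m" "n - 1 \<noteq> 0" using False by (auto simp: m_def)
  ultimately show ?thesis unfolding I_r_def using module_Tred nilp_order_shift_mat[of m] tbs_Tred False
    by simp
qed

theorem socle_top_and_reduction:
  "subquot_iso T (soc0 T) (soc1 T) {0\<^sub>v (dim0 T)} {0\<^sub>v (dim1 T)} S1
    \<and> subquot_iso T (carrier_vec (dim0 T)) (carrier_vec (dim1 T)) (rad0 T) (rad1 T) S0
    \<and> (\<exists>T'. T' \<in> I_r (n - 1) \<and> subquot_iso T (rad0 T) (rad1 T) (soc0 T) (soc1 T) T')"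
  using iso_S1 iso_S0 Tred_in_Ir iso_Tred unfolding rad0_eq rad1_eq soc0_eq soc1_eq by blast

end

lemma Il_coordinates_exist:
  assumes n: "n \<ge> 1" and T: "T \<in> I_l n"
  shows "\<exists>Ai P Q. Il_coordinates T n Ai P Q"
proof -
  have module: "is_module T" and dims: "dim0 T = n" "dim1 T = n" and inv: "invertible_mat (ta T)"
    and nilp: "nilp_order (tbs T * ta T) n n"
    using T unfolding I_l_def by auto
  have A: "ta T \<in> carrier_mat n n" and Y: "tbs T \<in> carrier_mat n n"
    using is_module_carriers[OF module] dims by auto
  obtain Ai where Ai: "ta T * Ai = 1\<^sub>m n" "Ai * ta T = 1\<^sub>m (dim_row Ai)"
    using inv A unfolding invertible_mat_def inverts_mat_def by auto
  have "dim_col Ai = n" using arg_cong[OF Ai(1), of dim_col] by simp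
  moreover have "dim_row Ai = n" using arg_cong[OF Ai(2), of dim_col] A by simp
  ultimately have Ai_carrier: "Ai \<in> carrier_mat n n" by auto
  have N: "tbs T * ta T \<in> carrier_mat n n" using A Y by auto
  obtain P Q where PQ: "P \<in> carrier_mat n n" "Q \<in> carrier_mat n n" "P * Q = 1\<^sub>m n" "Q * P = 1\<^sub>m n"
      "(tbs T * ta T) * P = P * shift_mat n"
    using nilpotent_max_order_jordan_basis[OF N] nilp unfolding nilp_order_def by blast
  have "Il_coordinates T n Ai P Q"
    by unfold_locales (use n module dims Ai_carrier Ai PQ nilp in \<open>auto simp: nilp_order_def\<close>)
  then show ?thesis by blast
qed

theorem mainTheorem12:
  fixes n :: nat and T :: rep
  assumes "n \<ge> 1" and "T \<in> I_l n"
  shows "subquot_iso T (soc0 T) (soc1 T) {0\<^sub>v (dim0 T)} {0\<^sub>v (dim1 T)} S1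
    \<and> subquot_iso T (carrier_vec (dim0 T)) (carrier_vec (dim1 T)) (rad0 T) (rad1 T) S0
    \<and> (\<exists>T'. T' \<in> I_r (n - 1) \<and> subquot_iso T (rad0 T) (rad1 T) (soc0 T) (soc1 T) T')"
proof -
  obtain Ai P Q where coords: "Il_coordinates T n Ai P Q" using Il_coordinates_exist[OF assms] by blast
  show ?thesis using Il_coordinates.socle_top_and_reduction[OF coords] .
qed

end
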